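(* Let $(\Omega,\mathcal{F},\mathbb{P})$ be a nonatomic probability space and let $(\mathcal{X},\mathcal{X}^\ast)$ be a pair of law-invariant vector subspaces of $L^1$, each containing $L^\infty$, such that $XY\in L^1$ for all $X\in\mathcal{X}$ and $Y\in\mathcal{X}^\ast$. Let $S=(S_0,S_1)$ be an eligible asset and let $\rho:\mathcal{X}\to(-\infty,\infty]$ be a proper, convex, $\sigma(\mathcal{X},\mathcal{X}^\ast)$-lower semicontinuous, law-invariant, $S$-additive risk measure with $\rho(0)<\infty$. If $S$ is risky, then for every $X\in\mathcal{X}$ \[\rho(X)=\frac{S_0}{\mathbb{E}_{\mathbb{P}}[S_1]}\,\mathbb{E}_{\mathbb{P}}[-X]+\rho(0).\] Moreover, if $\rho$ is also cash-additive, then $\mathbb{E}_{\mathbb{P}}[S_1]=S_0$.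
   Context: An eligible asset is a pair $S=(S_0,S_1)$ with $S_0\in(0,\infty)$ and $S_1\in\mathcal{X}$ positive ($S_1\ge0$ a.s.) and nonzero; $S$ is risky if $S_1$ is not a.s. constant; $S$ is cash if $S=(1,1)$. A functional $\rho:\mathcal{X}\to(-\infty,\infty]$ is an $S$-additive risk measure if $\rho(X+mS_1)=\rho(X)-mS_0$ for all $X\in\mathcal{X}$, $m\in\mathbb{R}$, and $\rho$ is decreasing ($\rho(X)\le\rho(Y)$ whenever $X\ge Y$); cash-additive means $S$-additive for $S=(1,1)$. Proper means $\rho(X)<\infty$ for some $X$. Law invariance of a set or functional: invariance under replacing a random variable by one with the same law under $\mathbb{P}$. $\sigma(\mathcal{X},\mathcal{X}^\ast)$ is the weakest linear topology on $\mathcal{X}$ for which $X\mapsto\mathbb{E}_{\mathbb{P}}[XY]$ is continuous for every $Y\in\mathcal{X}^\ast$; lower semicontinuity is with respect to nets in this topology. *)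

theory Defs
  imports "HOL-Probability.Probability"
begin

text \<open>Random variables are real-valued measurable functions on the sample space;
  elements of L^1 etc. are represented by functions (identified up to law / a.e.
  equality through the law-invariance assumptions).\<close>

definition nonatomic :: "'a measure \<Rightarrow> bool" where
  "nonatomic M \<longleftrightarrow> (\<forall>A\<in>sets M. measure M A > 0 \<longrightarrow>
      (\<exists>B\<in>sets M. B \<subseteq> A \<and> 0 < measure M B \<and> measure M B < measure M A))"

definition same_law :: "'a measure \<Rightarrow> ('a \<Rightarrow> real) \<Rightarrow> ('a \<Rightarrow> real) \<Rightarrow> bool" where
  "same_law M X Y \<longleftrightarrow> X \<in> borel_measurable M \<and> Y \<in> borel_measurable M \<and>
      distr M borel X = distr M borel Y"

definition law_invariant_set :: "'a measure \<Rightarrow> ('a \<Rightarrow> real) set \<Rightarrow> bool" where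
  "law_invariant_set M \<X> \<longleftrightarrow> (\<forall>X\<in>\<X>. \<forall>Y. same_law M X Y \<longrightarrow> Y \<in> \<X>)"

definition law_invariant_fun ::
    "'a measure \<Rightarrow> ('a \<Rightarrow> real) set \<Rightarrow> (('a \<Rightarrow> real) \<Rightarrow> ereal) \<Rightarrow> bool" where
  "law_invariant_fun M \<X> \<rho> \<longleftrightarrow> (\<forall>X\<in>\<X>. \<forall>Y\<in>\<X>. same_law M X Y \<longrightarrow> \<rho> X = \<rho> Y)"

definition admissible_space :: "'a measure \<Rightarrow> ('a \<Rightarrow> real) set \<Rightarrow> bool" where
  "admissible_space M \<X> \<longleftrightarrow>
     (\<forall>X\<in>\<X>. integrable M X) \<and>
     (\<lambda>_. 0) \<in> \<X> \<and>
     (\<forall>X\<in>\<X>. \<forall>Y\<in>\<X>. (\<lambda>\<omega>. X \<omega> + Y \<omega>) \<in> \<X>) \<and>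
     (\<forall>X\<in>\<X>. \<forall>c::real. (\<lambda>\<omega>. c * X \<omega>) \<in> \<X>) \<and>
     (\<forall>X\<in>borel_measurable M. (\<exists>C. AE \<omega> in M. \<bar>X \<omega>\<bar> \<le> C) \<longrightarrow> X \<in> \<X>) \<and>
     law_invariant_set M \<X>"

definition weak_top ::
    "'a measure \<Rightarrow> ('a \<Rightarrow> real) set \<Rightarrow> ('a \<Rightarrow> real) set \<Rightarrow> ('a \<Rightarrow> real) topology" where
  "weak_top M \<X> \<X>' = pullback_topology \<X>
      (\<lambda>X. restrict (\<lambda>Y. integral\<^sup>L M (\<lambda>\<omega>. X \<omega> * Y \<omega>)) \<X>')
      (product_topology (\<lambda>_. euclideanreal) \<X>')"

definition lsc_on :: "'b topology \<Rightarrow> ('b \<Rightarrow> ereal) \<Rightarrow> bool" where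
  "lsc_on T f \<longleftrightarrow> (\<forall>c. closedin T {x \<in> topspace T. f x \<le> c})"

definition convex_fun :: "('a \<Rightarrow> real) set \<Rightarrow> (('a \<Rightarrow> real) \<Rightarrow> ereal) \<Rightarrow> bool" where
  "convex_fun \<X> \<rho> \<longleftrightarrow> (\<forall>X\<in>\<X>. \<forall>Y\<in>\<X>. \<forall>l::real. 0 \<le> l \<and> l \<le> 1 \<longrightarrow>
      \<rho> (\<lambda>\<omega>. l * X \<omega> + (1 - l) * Y \<omega>) \<le> ereal l * \<rho> X + ereal (1 - l) * \<rho> Y)"

definition eligible_asset :: "'a measure \<Rightarrow> ('a \<Rightarrow> real) set \<Rightarrow> real \<Rightarrow> ('a \<Rightarrow> real) \<Rightarrow> bool" where
  "eligible_asset M \<X> S0 S1 \<longleftrightarrow> 0 < S0 \<and> S1 \<in> \<X> \<and> (AE \<omega> in M. S1 \<omega> \<ge> 0) \<and>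
      \<not> (AE \<omega> in M. S1 \<omega> = 0)"

definition risky :: "'a measure \<Rightarrow> ('a \<Rightarrow> real) \<Rightarrow> bool" where
  "risky M S1 \<longleftrightarrow> \<not> (\<exists>c. AE \<omega> in M. S1 \<omega> = c)"

definition S_additive_risk_measure ::
    "'a measure \<Rightarrow> ('a \<Rightarrow> real) set \<Rightarrow> real \<Rightarrow> ('a \<Rightarrow> real) \<Rightarrow> (('a \<Rightarrow> real) \<Rightarrow> ereal) \<Rightarrow> bool" where
  "S_additive_risk_measure M \<X> S0 S1 \<rho> \<longleftrightarrow>
     (\<forall>X\<in>\<X>. \<rho> X \<noteq> -\<infinity>) \<and>
     (\<forall>X\<in>\<X>. \<forall>m::real. \<rho> (\<lambda>\<omega>. X \<omega> + m * S1 \<omega>) = \<rho> X - ereal (m * S0)) \<and>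
     (\<forall>X\<in>\<X>. \<forall>Y\<in>\<X>. (AE \<omega> in M. X \<omega> \<ge> Y \<omega>) \<longrightarrow> \<rho> X \<le> \<rho> Y)"

abbreviation cash_additive_risk_measure ::
    "'a measure \<Rightarrow> ('a \<Rightarrow> real) set \<Rightarrow> (('a \<Rightarrow> real) \<Rightarrow> ereal) \<Rightarrow> bool" where
  "cash_additive_risk_measure M \<X> \<rho> \<equiv> S_additive_risk_measure M \<X> 1 (\<lambda>_. 1) \<rho>"

end

theory Submission
  imports Defs
begin

text \<open>
  Let \<open>Z\<close> have expectation zero and suppose \<open>\<rho> Z > \<rho> 0\<close>. The sublevel set
  \<open>K = {W. \<rho> W \<le> \<rho> 0}\<close> is convex and \<open>\<sigma>(\<X>, \<X>')\<close>-closed, so some \<open>Y \<in> \<X>'\<close> strictly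
  separates \<open>Z\<close> from \<open>K\<close>; this reduces to a nearest-point argument in the finitely many
  coordinates of a basic weak neighbourhood of \<open>Z\<close>. By \<open>S\<close>-additivity and law invariance,
  \<open>K\<close> contains \<open>m S' - m S1\<close> for every real \<open>m\<close> and every \<open>S'\<close> with the law of \<open>S1\<close>, so
  \<open>E[S' Y]\<close> does not depend on the rearrangement \<open>S'\<close>. On a nonatomic space a nonconstant \<open>Y\<close>
  admits two rearrangements of the nonconstant \<open>S1\<close>, one arranged like \<open>Y\<close> and one against
  it, with different pairings; hence \<open>Y\<close> is constant, and then \<open>E[Z Y] = 0\<close> contradicts the
  separation. Applying this to \<open>Z\<close> and \<open>-Z\<close>, convexity gives \<open>\<rho> Z = \<rho> 0\<close>, and writing
  \<open>X = Z + (E X / E S1) S1\<close> yields the formula. For cash-additive \<open>\<rho>\<close>, the two resulting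
  expressions for \<open>\<rho> 1\<close> force \<open>E S1 = S0\<close>.
\<close>

section \<open>Strict separation in finitely many coordinates\<close>

text \<open>By the parallelogram law, minimizing sequences for the distance to a convex set converge.\<close>

lemma convex_minimizing_sequence:
  fixes A :: "('i \<Rightarrow> real) set" and z :: "'i \<Rightarrow> real"
  assumes F: "finite F" and A: "A \<noteq> {}"
    and conv: "\<And>a b l. a \<in> A \<Longrightarrow> b \<in> A \<Longrightarrow> 0 \<le> l \<Longrightarrow> l \<le> 1 \<Longrightarrow>
      \<exists>c\<in>A. \<forall>i\<in>F. c i = l * a i + (1 - l) * b i"
  obtains s p where "\<And>n. s n \<in> A" "\<And>i. i \<in> F \<Longrightarrow> (\<lambda>n. s n i) \<longlonglongrightarrow> p i"
    "(\<Sum>i\<in>F. (z i - p i)\<^sup>2) = (INF a\<in>A. \<Sum>i\<in>F. (z i - a i)\<^sup>2)"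
proof -
  define d where "d a = (\<Sum>i\<in>F. (z i - a i)\<^sup>2)" for a :: "'i \<Rightarrow> real"
  define \<delta> where "\<delta> = (INF a\<in>A. d a)"
  have bdd: "bdd_below (d ` A)"
    by (rule bdd_belowI2[of _ 0]) (simp add: d_def sum_nonneg)
  have \<delta>_le: "\<delta> \<le> d a" if "a \<in> A" for a
    unfolding \<delta>_def using bdd that by (rule cINF_lower)
  have "\<exists>a\<in>A. d a < \<delta> + 1 / (real n + 1)" for n :: nat
  proof -
    have "(INF a\<in>A. d a) < \<delta> + 1 / (real n + 1)" unfolding \<delta>_def by simp
    then show ?thesis using A bdd by (simp add: cInf_less_iff)
  qed
  then obtain s where sA: "\<And>n. s n \<in> A" and sd: "\<And>n. d (s n) < \<delta> + 1 / (real n + 1)"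
    by metis
  have parallelogram: "(\<Sum>i\<in>F. (a i - b i)\<^sup>2) \<le> 2 * d a + 2 * d b - 4 * \<delta>"
    if ab: "a \<in> A" "b \<in> A" for a b
  proof -
    obtain c where c: "c \<in> A" "\<forall>i\<in>F. c i = (1/2) * a i + (1 - 1/2) * b i"
      using conv[OF ab, of "1/2"] by auto
    have "(\<Sum>i\<in>F. (a i - b i)\<^sup>2) = 2 * d a + 2 * d b - 4 * d c"
      unfolding d_def sum_distrib_left sum_subtractf[symmetric] sum.distrib[symmetric]
      using c(2) by (intro sum.cong) (auto simp: power2_eq_square algebra_simps)
    then show ?thesis using \<delta>_le[OF c(1)] by simp
  qed
  have Cauchy: "Cauchy (\<lambda>n. s n i)" if i: "i \<in> F" for i
  proof (rule metric_CauchyI)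
    fix r :: real assume r: "r > 0"
    obtain N :: nat where N: "4 / r\<^sup>2 < real N" using reals_Archimedean2 by blast
    have "dist (s m i) (s n i) < r" if "N \<le> m" "N \<le> n" for m n
    proof -
      have "4 / r\<^sup>2 < real m + 1" "4 / r\<^sup>2 < real n + 1"
        using N that by linarith+
      then have "1 / (real m + 1) < r\<^sup>2 / 4" "1 / (real n + 1) < r\<^sup>2 / 4"
        using r by (auto simp: field_simps)
      moreover have "(s m i - s n i)\<^sup>2 \<le> (\<Sum>j\<in>F. (s m j - s n j)\<^sup>2)"
        by (rule member_le_sum[OF i]) (auto simp: F)
      then have "(s m i - s n i)\<^sup>2 \<le> 2 * d (s m) + 2 * d (s n) - 4 * \<delta>"
        using parallelogram[OF sA sA] by (rule order_trans)
      ultimately have "(s m i - s n i)\<^sup>2 < r\<^sup>2"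
        using sd[of m] sd[of n] by linarith
      then show ?thesis
        using r power_less_imp_less_base[of "\<bar>s m i - s n i\<bar>" 2 r] by (simp add: dist_real_def)
    qed
    then show "\<exists>N. \<forall>m\<ge>N. \<forall>n\<ge>N. dist (s m i) (s n i) < r" by blast
  qed
  define p where "p i = lim (\<lambda>n. s n i)" for i
  have sp: "(\<lambda>n. s n i) \<longlonglongrightarrow> p i" if "i \<in> F" for i
    unfolding p_def using Cauchy[OF that] by (simp add: Cauchy_convergent_iff convergent_LIMSEQ_iff)
  have "(\<lambda>n. d (s n)) \<longlonglongrightarrow> d p"
    unfolding d_def by (intro tendsto_intros sp)
  moreover have "(\<lambda>n. d (s n)) \<longlonglongrightarrow> \<delta>"
  proof (rule real_tendsto_sandwich[where f="\<lambda>_. \<delta>" and h="\<lambda>n. \<delta> + 1 / (real n + 1)"])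
    show "\<forall>\<^sub>F n in sequentially. \<delta> \<le> d (s n)" using \<delta>_le sA by simp
    show "\<forall>\<^sub>F n in sequentially. d (s n) \<le> \<delta> + 1 / (real n + 1)" using sd by (simp add: less_imp_le)
    show "(\<lambda>n. \<delta> + 1 / (real n + 1)) \<longlonglongrightarrow> \<delta>"
      using LIMSEQ_inverse_real_of_nat_add[of \<delta>] by (simp add: inverse_eq_divide add.commute)
  qed simp
  ultimately have "d p = \<delta>" by (rule LIMSEQ_unique)
  then show thesis using that sA sp unfolding d_def \<delta>_def by blast
qed

lemma convex_nearest_point:
  fixes A :: "('i \<Rightarrow> real) set" and z :: "'i \<Rightarrow> real"
  assumes F: "finite F" and A: "A \<noteq> {}"
    and conv: "\<And>a b l. a \<in> A \<Longrightarrow> b \<in> A \<Longrightarrow> 0 \<le> l \<Longrightarrow> l \<le> 1 \<Longrightarrow>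
      \<exists>c\<in>A. \<forall>i\<in>F. c i = l * a i + (1 - l) * b i"
  obtains p where "(\<Sum>i\<in>F. (z i - p i)\<^sup>2) = (INF a\<in>A. \<Sum>i\<in>F. (z i - a i)\<^sup>2)"
    and "\<And>a. a \<in> A \<Longrightarrow> (\<Sum>i\<in>F. (z i - p i) * (a i - p i)) \<le> 0"
proof -
  define d where "d a = (\<Sum>i\<in>F. (z i - a i)\<^sup>2)" for a :: "'i \<Rightarrow> real"
  obtain s p where sA: "\<And>n. s n \<in> A" and sp: "\<And>i. i \<in> F \<Longrightarrow> (\<lambda>n. s n i) \<longlonglongrightarrow> p i"
    and dp: "d p = (INF a\<in>A. d a)"
    using convex_minimizing_sequence[OF F A conv] unfolding d_def by blast
  have bdd: "bdd_below (d ` A)"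
    by (rule bdd_belowI2[of _ 0]) (simp add: d_def sum_nonneg)
  have dp_le: "d p \<le> d a" if "a \<in> A" for a
    unfolding dp using bdd that by (rule cINF_lower)
  have "(\<Sum>i\<in>F. (z i - p i) * (a i - p i)) \<le> 0" if a: "a \<in> A" for a
  proof -
    define L where "L = (\<Sum>i\<in>F. (z i - p i) * (a i - p i))"
    define R where "R = (\<Sum>i\<in>F. (a i - p i)\<^sup>2)"
    have R: "0 \<le> R" unfolding R_def by (simp add: sum_nonneg)
    have small_step: "2 * L \<le> t * R" if t: "0 < t" "t \<le> 1" for t
    proof -
      have "\<forall>n. \<exists>c\<in>A. \<forall>i\<in>F. c i = t * a i + (1 - t) * s n i"
        using conv[OF a sA] t by simp
      then obtain c where cA: "\<And>n. c n \<in> A" and c: "\<And>n i. i \<in> F \<Longrightarrow> c n i = t * a i + (1 - t) * s n i"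
        by metis
      have "(\<lambda>n. d (c n)) = (\<lambda>n. \<Sum>i\<in>F. (z i - (t * a i + (1 - t) * s n i))\<^sup>2)"
        unfolding d_def using c by (auto intro!: sum.cong)
      also have "\<dots> \<longlonglongrightarrow> (\<Sum>i\<in>F. (z i - (t * a i + (1 - t) * p i))\<^sup>2)"
        by (intro tendsto_intros sp)
      finally have "d p \<le> (\<Sum>i\<in>F. (z i - (t * a i + (1 - t) * p i))\<^sup>2)"
        by (rule LIMSEQ_le_const) (use dp_le cA in auto)
      also have "\<dots> = d p - 2 * t * L + t\<^sup>2 * R"
        unfolding d_def L_def R_def sum_distrib_left sum_subtractf[symmetric] sum.distrib[symmetric]
        by (intro sum.cong) (auto simp: power2_eq_square algebra_simps)
      finally have "t * (2 * L) \<le> t * (t * R)" by (simp add: power2_eq_square algebra_simps)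
      then show ?thesis using t by simp
    qed
    have "2 * L \<le> 0 + e" if e: "0 < e" for e
    proof -
      define t where "t = min 1 (e / (R + 1))"
      have t: "0 < t" "t \<le> 1" using e R by (auto simp: t_def)
      have "t * R \<le> e / (R + 1) * R" using R by (intro mult_right_mono) (auto simp: t_def)
      also have "\<dots> \<le> e" using e R by (simp add: field_simps)
      finally show ?thesis using small_step[OF t] by simp
    qed
    then have "2 * L \<le> 0" by (rule field_le_epsilon)
    then show ?thesis by (simp add: L_def)
  qed
  with dp show thesis using that unfolding d_def by blast
qed

lemma finite_strict_separation:
  fixes A :: "('i \<Rightarrow> real) set" and z :: "'i \<Rightarrow> real"
  assumes F: "finite F" and A: "A \<noteq> {}"
    and conv: "\<And>a b l. a \<in> A \<Longrightarrow> b \<in> A \<Longrightarrow> 0 \<le> l \<Longrightarrow> l \<le> 1 \<Longrightarrow>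
      \<exists>c\<in>A. \<forall>i\<in>F. c i = l * a i + (1 - l) * b i"
    and \<epsilon>: "\<epsilon> > 0" and far: "\<And>a. a \<in> A \<Longrightarrow> \<exists>i\<in>F. \<epsilon> \<le> \<bar>a i - z i\<bar>"
  obtains w \<delta> where "\<delta> > 0" "\<And>a. a \<in> A \<Longrightarrow> (\<Sum>i\<in>F. w i * a i) + \<delta> \<le> (\<Sum>i\<in>F. w i * z i)"
proof -
  obtain p where dp: "(\<Sum>i\<in>F. (z i - p i)\<^sup>2) = (INF a\<in>A. \<Sum>i\<in>F. (z i - a i)\<^sup>2)"
    and obtuse: "\<And>a. a \<in> A \<Longrightarrow> (\<Sum>i\<in>F. (z i - p i) * (a i - p i)) \<le> 0"
    using convex_nearest_point[OF F A conv, of z] by blast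
  define w where "w i = z i - p i" for i
  define \<delta> where "\<delta> = (\<Sum>i\<in>F. (z i - p i)\<^sup>2)"
  have "\<epsilon>\<^sup>2 \<le> (\<Sum>i\<in>F. (z i - a i)\<^sup>2)" if a: "a \<in> A" for a
  proof -
    obtain i where i: "i \<in> F" "\<epsilon> \<le> \<bar>a i - z i\<bar>" using far[OF a] by blast
    have "\<epsilon>\<^sup>2 \<le> (a i - z i)\<^sup>2"
      using power_mono[OF i(2), of 2] \<epsilon> by simp
    also have "\<dots> = (z i - a i)\<^sup>2"
      by (rule power2_commute)
    also have "\<dots> \<le> (\<Sum>i\<in>F. (z i - a i)\<^sup>2)"
      by (rule member_le_sum[OF i(1)]) (auto simp: F)
    finally show ?thesis .
  qed
  then have "\<epsilon>\<^sup>2 \<le> \<delta>"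
    unfolding \<delta>_def dp using A by (intro cINF_greatest)
  then have "\<delta> > 0" using \<epsilon> by (meson less_le_trans zero_less_power)
  moreover have "(\<Sum>i\<in>F. w i * a i) + \<delta> \<le> (\<Sum>i\<in>F. w i * z i)" if a: "a \<in> A" for a
  proof -
    have "(\<Sum>i\<in>F. w i * z i) - (\<Sum>i\<in>F. w i * a i) = \<delta> - (\<Sum>i\<in>F. w i * (a i - p i))"
      unfolding \<delta>_def sum_subtractf[symmetric]
      by (intro sum.cong) (auto simp: w_def power2_eq_square algebra_simps)
    then show ?thesis using obtuse[OF a] by (simp add: w_def)
  qed
  ultimately show thesis by (rule that)
qed

section \<open>Admissible spaces and the weak topology\<close>

context
  fixes M :: "'a measure" and \<X> :: "('a \<Rightarrow> real) set"
  assumes adm: "admissible_space M \<X>"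
begin

lemma admissible_space_integrable: "X \<in> \<X> \<Longrightarrow> integrable M X"
  using adm by (simp add: admissible_space_def)

lemma admissible_space_zero: "(\<lambda>_. 0) \<in> \<X>"
  using adm by (simp add: admissible_space_def)

lemma admissible_space_add: "X \<in> \<X> \<Longrightarrow> Y \<in> \<X> \<Longrightarrow> (\<lambda>\<omega>. X \<omega> + Y \<omega>) \<in> \<X>"
  using adm by (simp add: admissible_space_def)

lemma admissible_space_cmult: "X \<in> \<X> \<Longrightarrow> (\<lambda>\<omega>. c * X \<omega>) \<in> \<X>"
  using adm by (simp add: admissible_space_def)

lemma admissible_space_const: "(\<lambda>_. c) \<in> \<X>"
proof -
  have "\<exists>C. AE \<omega> in M. \<bar>c\<bar> \<le> C" by (intro exI[of _ "\<bar>c\<bar>"]) simp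
  then show ?thesis using adm unfolding admissible_space_def by simp
qed

lemma admissible_space_same_law: "X \<in> \<X> \<Longrightarrow> same_law M X Y \<Longrightarrow> Y \<in> \<X>"
  using adm by (auto simp: admissible_space_def law_invariant_set_def)

lemma admissible_space_sum:
  "finite F \<Longrightarrow> F \<subseteq> \<X> \<Longrightarrow> (\<lambda>\<omega>. \<Sum>Y\<in>F. w Y * Y \<omega>) \<in> \<X>"
proof (induction F rule: finite_induct)
  case empty
  then show ?case using admissible_space_zero by simp
next
  case (insert Y F)
  then show ?case using admissible_space_add admissible_space_cmult by simp
qed

end

lemma topspace_weak_top: "topspace (weak_top M \<X> \<X>') = \<X>"
  by (auto simp: weak_top_def topspace_pullback_topology)

lemma weak_top_closed_finite_gap:
  assumes K: "closedin (weak_top M \<X> \<X>') K" and Z: "Z \<in> \<X>" "Z \<notin> K"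
  obtains F \<epsilon> where "finite F" "F \<subseteq> \<X>'" "\<epsilon> > 0"
    "\<And>W. W \<in> K \<Longrightarrow> \<exists>Y\<in>F. \<epsilon> \<le> \<bar>(\<integral>\<omega>. W \<omega> * Y \<omega> \<partial>M) - (\<integral>\<omega>. Z \<omega> * Y \<omega> \<partial>M)\<bar>"
proof -
  define g where "g X = restrict (\<lambda>Y. \<integral>\<omega>. X \<omega> * Y \<omega> \<partial>M) \<X>'" for X :: "'a \<Rightarrow> real"
  have KX: "K \<subseteq> \<X>" using closedin_subset[OF K] by (simp add: topspace_weak_top)
  have "openin (weak_top M \<X> \<X>') (\<X> - K)"
    using K by (simp add: closedin_def topspace_weak_top)
  then obtain U where U: "openin (product_topology (\<lambda>_. euclideanreal) \<X>') U"
      and UK: "\<X> - K = g -` U \<inter> \<X>"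
    unfolding weak_top_def openin_pullback_topology g_def by blast
  have "g Z \<in> U" using Z UK by blast
  then obtain V where V_fin: "finite {Y \<in> \<X>'. V Y \<noteq> UNIV}"
      and V_open: "\<And>Y. Y \<in> \<X>' \<Longrightarrow> open (V Y)" and gZ: "g Z \<in> Pi\<^sub>E \<X>' V"
      and VU: "Pi\<^sub>E \<X>' V \<subseteq> U"
    using U unfolding openin_product_topology_alt by force
  define F where "F = {Y \<in> \<X>'. V Y \<noteq> UNIV}"
  have "\<exists>e>0. \<forall>y. \<bar>y - (\<integral>\<omega>. Z \<omega> * Y \<omega> \<partial>M)\<bar> < e \<longrightarrow> y \<in> V Y" if "Y \<in> F" for Y
  proof -
    have "Y \<in> \<X>'" using that by (simp add: F_def)
    then have "open (V Y)" "(\<integral>\<omega>. Z \<omega> * Y \<omega> \<partial>M) \<in> V Y"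
      using V_open gZ by (auto simp: g_def PiE_iff)
    then show ?thesis by (auto simp: open_dist dist_real_def)
  qed
  then obtain e where e: "\<And>Y. Y \<in> F \<Longrightarrow> e Y > 0"
    and eV: "\<And>Y y. Y \<in> F \<Longrightarrow> \<bar>y - (\<integral>\<omega>. Z \<omega> * Y \<omega> \<partial>M)\<bar> < e Y \<Longrightarrow> y \<in> V Y"
    by metis
  define \<epsilon> where "\<epsilon> = Min (insert 1 (e ` F))"
  have F: "finite F" "F \<subseteq> \<X>'" using V_fin by (auto simp: F_def)
  have \<epsilon>: "\<epsilon> > 0" unfolding \<epsilon>_def using F e by (subst Min_gr_iff) auto
  have \<epsilon>_le: "\<epsilon> \<le> e Y" if "Y \<in> F" for Y
    unfolding \<epsilon>_def using F that by (intro Min_le) auto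
  have "\<exists>Y\<in>F. \<epsilon> \<le> \<bar>(\<integral>\<omega>. W \<omega> * Y \<omega> \<partial>M) - (\<integral>\<omega>. Z \<omega> * Y \<omega> \<partial>M)\<bar>" if W: "W \<in> K" for W
  proof (rule ccontr)
    assume "\<not> ?thesis"
    then have "g W Y \<in> V Y" if "Y \<in> \<X>'" for Y
      using that \<epsilon>_le eV by (cases "Y \<in> F") (force simp: g_def F_def)+
    then have "g W \<in> Pi\<^sub>E \<X>' V" by (simp add: g_def PiE_iff)
    then show False using VU UK KX W by blast
  qed
  with F \<epsilon> show thesis using that by blast
qed

lemma weak_top_strict_separation:
  assumes adm: "admissible_space M \<X>'"
    and XY_int: "\<And>X Y. X \<in> \<X> \<Longrightarrow> Y \<in> \<X>' \<Longrightarrow> integrable M (\<lambda>\<omega>. X \<omega> * Y \<omega>)"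
    and K: "closedin (weak_top M \<X> \<X>') K" "K \<noteq> {}"
    and K_conv: "\<And>W1 W2 l. W1 \<in> K \<Longrightarrow> W2 \<in> K \<Longrightarrow> 0 \<le> l \<Longrightarrow> l \<le> 1 \<Longrightarrow>
      (\<lambda>\<omega>. l * W1 \<omega> + (1 - l) * W2 \<omega>) \<in> K"
    and Z: "Z \<in> \<X>" "Z \<notin> K"
  obtains Y \<alpha> where "Y \<in> \<X>'" "\<alpha> < (\<integral>\<omega>. Z \<omega> * Y \<omega> \<partial>M)"
    "\<And>W. W \<in> K \<Longrightarrow> (\<integral>\<omega>. W \<omega> * Y \<omega> \<partial>M) \<le> \<alpha>"
proof -
  have KX: "K \<subseteq> \<X>" using closedin_subset[OF K(1)] by (simp add: topspace_weak_top)
  obtain F \<epsilon> where F: "finite F" "F \<subseteq> \<X>'" and \<epsilon>: "\<epsilon> > 0"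
    and far: "\<And>W. W \<in> K \<Longrightarrow> \<exists>Y\<in>F. \<epsilon> \<le> \<bar>(\<integral>\<omega>. W \<omega> * Y \<omega> \<partial>M) - (\<integral>\<omega>. Z \<omega> * Y \<omega> \<partial>M)\<bar>"
    using weak_top_closed_finite_gap[OF K(1) Z] by blast
  define T where "T W Y = (\<integral>\<omega>. W \<omega> * Y \<omega> \<partial>M)" for W Y :: "'a \<Rightarrow> real"
  have T_conv: "T (\<lambda>\<omega>. l * W1 \<omega> + (1 - l) * W2 \<omega>) Y = l * T W1 Y + (1 - l) * T W2 Y"
    if "W1 \<in> \<X>" "W2 \<in> \<X>" "Y \<in> \<X>'" for W1 W2 Y l
  proof -
    have "(\<lambda>\<omega>. (l * W1 \<omega> + (1 - l) * W2 \<omega>) * Y \<omega>) = (\<lambda>\<omega>. l * (W1 \<omega> * Y \<omega>) + (1 - l) * (W2 \<omega> * Y \<omega>))"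
      by (simp add: algebra_simps)
    then show ?thesis using XY_int that by (simp add: T_def)
  qed
  have T_K_conv: "\<exists>c\<in>T ` K. \<forall>Y\<in>F. c Y = l * a Y + (1 - l) * b Y"
    if ab: "a \<in> T ` K" "b \<in> T ` K" and l: "0 \<le> l" "l \<le> 1" for a b l
  proof -
    obtain W1 W2 where W: "W1 \<in> K" "W2 \<in> K" "a = T W1" "b = T W2" using ab by blast
    then have "T (\<lambda>\<omega>. l * W1 \<omega> + (1 - l) * W2 \<omega>) \<in> T ` K" using K_conv l by blast
    moreover have "\<forall>Y\<in>F. T (\<lambda>\<omega>. l * W1 \<omega> + (1 - l) * W2 \<omega>) Y = l * a Y + (1 - l) * b Y"
      using W KX F(2) by (auto intro!: T_conv)
    ultimately show ?thesis by blast
  qed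
  have "T ` K \<noteq> {}" using K(2) by simp
  moreover have "\<exists>Y\<in>F. \<epsilon> \<le> \<bar>a Y - T Z Y\<bar>" if "a \<in> T ` K" for a
    using far that by (auto simp: T_def)
  ultimately obtain w \<delta> where \<delta>: "\<delta> > 0"
    and sep: "\<And>a. a \<in> T ` K \<Longrightarrow> (\<Sum>V\<in>F. w V * a V) + \<delta> \<le> (\<Sum>V\<in>F. w V * T Z V)"
    using finite_strict_separation[OF F(1) _ T_K_conv \<epsilon>] by blast
  define Y where "Y \<omega> = (\<Sum>V\<in>F. w V * V \<omega>)" for \<omega>
  have T_Y: "T W Y = (\<Sum>V\<in>F. w V * T W V)" if "W \<in> \<X>" for W
  proof -
    have "T W Y = (\<integral>\<omega>. (\<Sum>V\<in>F. w V * (W \<omega> * V \<omega>)) \<partial>M)"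
      unfolding T_def Y_def by (simp add: sum_distrib_left algebra_simps)
    also have "\<dots> = (\<Sum>V\<in>F. w V * T W V)"
      using XY_int that F(2) unfolding T_def
      by (subst Bochner_Integration.integral_sum) (auto simp: subset_iff)
    finally show ?thesis .
  qed
  show thesis
  proof (rule that)
    show "Y \<in> \<X>'" unfolding Y_def using admissible_space_sum[OF adm F] .
    show "(\<Sum>V\<in>F. w V * T Z V) - \<delta> < (\<integral>\<omega>. Z \<omega> * Y \<omega> \<partial>M)"
      using T_Y[OF Z(1)] \<delta> by (simp add: T_def)
    show "(\<integral>\<omega>. W \<omega> * Y \<omega> \<partial>M) \<le> (\<Sum>V\<in>F. w V * T Z V) - \<delta>" if "W \<in> K" for W
      using T_Y[of W] sep[of "T W"] that KX by (auto simp: T_def)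
  qed
qed

section \<open>Nonatomic measures\<close>

context finite_measure
begin

lemma nonatomic_half_subset:
  assumes na: "nonatomic M" and B: "B \<in> sets M" "measure M B > 0"
  obtains C where "C \<in> sets M" "C \<subseteq> B" "0 < measure M C" "measure M C \<le> measure M B / 2"
proof -
  obtain C where C: "C \<in> sets M" "C \<subseteq> B" "0 < measure M C" "measure M C < measure M B"
    using na B unfolding nonatomic_def by blast
  have BC: "measure M (B - C) = measure M B - measure M C" "B - C \<in> sets M"
    using finite_measure_Diff[OF B(1) C(1,2)] B C by auto
  show thesis
  proof (cases "measure M C \<le> measure M B / 2")
    case True
    then show thesis using C by (intro that[of C])
  next
    case False
    then show thesis using C BC by (intro that[of "B - C"]) auto
  qed
qed

lemma nonatomic_small_subset:
  assumes na: "nonatomic M" and A: "A \<in> sets M" "measure M A > 0" and e: "e > 0"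
  obtains B where "B \<in> sets M" "B \<subseteq> A" "0 < measure M B" "measure M B < e"
proof -
  have "\<exists>B\<in>sets M. B \<subseteq> A \<and> 0 < measure M B \<and> measure M B \<le> (1/2)^n * measure M A" for n
  proof (induction n)
    case (Suc n)
    then obtain B where B: "B \<in> sets M" "B \<subseteq> A" "0 < measure M B" "measure M B \<le> (1/2)^n * measure M A"
      by blast
    then obtain C where "C \<in> sets M" "C \<subseteq> B" "0 < measure M C" "measure M C \<le> measure M B / 2"
      using nonatomic_half_subset[OF na] by metis
    then show ?case using B by (intro bexI[of _ C]) auto
  qed (use A in auto)
  moreover obtain n where "(1/2)^n < e / measure M A"
    using real_arch_pow_inv[of "e / measure M A" "1/2"] e A by auto
  ultimately show thesis
    using that A by (auto simp: pos_less_divide_eq intro: le_less_trans)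
qed

lemma almost_maximal_subset:
  assumes "E \<in> sets M" "measure M E \<le> t"
  obtains F where "F \<in> sets M" "F \<subseteq> A - E" "measure M E + measure M F \<le> t"
    "\<And>G. G \<in> sets M \<Longrightarrow> G \<subseteq> A - E \<Longrightarrow> measure M E + measure M G \<le> t \<Longrightarrow> measure M G \<le> 2 * measure M F"
proof -
  define \<G> where "\<G> = {G \<in> sets M. G \<subseteq> A - E \<and> measure M E + measure M G \<le> t}"
  have "{} \<in> \<G>" using assms(2) by (simp add: \<G>_def)
  have bdd: "bdd_above (measure M ` \<G>)"
    by (rule bdd_aboveI2[of _ _ "measure M (space M)"]) (simp add: bounded_measure)
  show thesis
  proof (cases "Sup (measure M ` \<G>) \<le> 0")
    case True
    then show thesis
      using \<open>{} \<in> \<G>\<close> cSup_upper[OF _ bdd] by (intro that[of "{}"]) (fastforce simp: \<G>_def)+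
  next
    case False
    then obtain F where F: "F \<in> \<G>" "Sup (measure M ` \<G>) / 2 < measure M F"
      using less_cSup_iff[OF _ bdd, of "Sup (measure M ` \<G>) / 2"] \<open>{} \<in> \<G>\<close> by auto
    have "measure M G \<le> 2 * measure M F" if "G \<in> \<G>" for G
      using cSup_upper[OF imageI[OF that] bdd] F(2) by simp
    with F(1) show thesis using that by (auto simp: \<G>_def)
  qed
qed

text \<open>Sierpinski's theorem. The greedy exhaustion below adds at each step a subset of at least
  half the largest measure that still fits.\<close>

lemma nonatomic_subset_measure:
  assumes na: "nonatomic M" and A: "A \<in> sets M" and t: "0 \<le> t" "t \<le> measure M A"
  obtains B where "B \<in> sets M" "B \<subseteq> A" "measure M B = t"
proof -
  define ok where "ok E \<longleftrightarrow> E \<in> sets M \<and> E \<subseteq> A \<and> measure M E \<le> t" for E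
  define good where "good E F \<longleftrightarrow> F \<in> sets M \<and> F \<subseteq> A - E \<and> measure M E + measure M F \<le> t \<and>
      (\<forall>G. G \<in> sets M \<longrightarrow> G \<subseteq> A - E \<longrightarrow> measure M E + measure M G \<le> t \<longrightarrow>
        measure M G \<le> 2 * measure M F)" for E F
  have good_ex: "\<exists>F. good E F" if E: "ok E" for E
  proof -
    obtain F where "F \<in> sets M" "F \<subseteq> A - E" "measure M E + measure M F \<le> t"
      "\<And>G. G \<in> sets M \<Longrightarrow> G \<subseteq> A - E \<Longrightarrow> measure M E + measure M G \<le> t \<Longrightarrow>
        measure M G \<le> 2 * measure M F"
      by (rule almost_maximal_subset[of E t A]) (use E in \<open>simp_all add: ok_def\<close>)
    then show ?thesis unfolding good_def by blast
  qed
  define pick where "pick E = (SOME F. good E F)" for E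
  have pick: "good E (pick E)" if "ok E" for E
    unfolding pick_def by (rule someI_ex) (rule good_ex[OF that])
  define E where "E = rec_nat {} (\<lambda>_ X. X \<union> pick X)"
  have E_Suc: "E (Suc n) = E n \<union> pick (E n)" for n by (simp add: E_def)
  have step: "measure M (E (Suc n)) = measure M (E n) + measure M (pick (E n)) \<and> ok (E (Suc n))"
    if "ok (E n)" for n
  proof -
    have "measure M (E (Suc n)) = measure M (E n) + measure M (pick (E n))"
      using pick[OF that] that unfolding E_Suc ok_def good_def by (intro finite_measure_Union) auto
    then show ?thesis using pick[OF that] that by (auto simp: E_Suc ok_def good_def)
  qed
  have E_ok: "ok (E n)" for n
  proof (induction n)
    case 0
    then show ?case using t by (simp add: E_def ok_def)
  next
    case (Suc n)
    then show ?case using step by blast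
  qed
  define L where "L = (\<Union>n. E n)"
  have L: "L \<in> sets M" "L \<subseteq> A" using E_ok by (auto simp: L_def ok_def)
  have lim: "(\<lambda>n. measure M (E n)) \<longlonglongrightarrow> measure M L"
    unfolding L_def using E_ok by (intro finite_Lim_measure_incseq incseq_SucI) (auto simp: ok_def E_Suc)
  have "measure M L \<le> t"
    using E_ok by (intro LIMSEQ_le_const2[OF lim]) (auto simp: ok_def)
  have "(\<lambda>n. measure M (E (Suc n)) - measure M (E n)) \<longlonglongrightarrow> measure M L - measure M L"
    by (intro tendsto_diff LIMSEQ_Suc lim)
  then have pick_0: "(\<lambda>n. measure M (pick (E n))) \<longlonglongrightarrow> 0"
    using step E_ok by simp
  have "\<not> measure M L < t"
  proof
    assume "measure M L < t"
    moreover have "measure M (A - L) = measure M A - measure M L"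
      using finite_measure_Diff[OF A L(1,2)] .
    ultimately obtain G where G: "G \<in> sets M" "G \<subseteq> A - L" "0 < measure M G" "measure M G < t - measure M L"
      using nonatomic_small_subset[OF na, of "A - L" "t - measure M L"] A L t by auto
    have bound: "measure M G \<le> 2 * measure M (pick (E n))" for n
    proof -
      have "E n \<subseteq> L" by (auto simp: L_def)
      then have "measure M (E n) + measure M G \<le> t" "G \<subseteq> A - E n"
        using finite_measure_mono[OF \<open>E n \<subseteq> L\<close> L(1)] G by auto
      then show ?thesis using pick[OF E_ok[of n]] G(1) unfolding good_def by blast
    qed
    have "eventually (\<lambda>n. measure M (pick (E n)) < measure M G / 2) sequentially"
      using pick_0 G(3) by (intro order_tendstoD) auto
    then obtain n where "measure M (pick (E n)) < measure M G / 2"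
      by (auto simp: eventually_sequentially)
    with bound[of n] show False by linarith
  qed
  with \<open>measure M L \<le> t\<close> have "measure M L = t" by linarith
  with L show thesis by (rule that)
qed

end

section \<open>Uniform variables on nonatomic spaces\<close>

text \<open>Level \<open>n\<close> consists of sets of measure \<open>j / 2 ^ n\<close> times the measure of \<open>B\<close>, increasing
  in \<open>j\<close>; level \<open>n + 1\<close> keeps them at even indices and inserts, at odd indices, the union of a set
  with half of its difference to the next one.\<close>

definition dyadic_family :: "('a set \<Rightarrow> 'a set) \<Rightarrow> 'a set \<Rightarrow> nat \<Rightarrow> nat \<Rightarrow> 'a set" where
  "dyadic_family half B = rec_nat (\<lambda>j. if j = 0 then {} else B)
     (\<lambda>_ G j. if even j then G (j div 2) else G (j div 2) \<union> half (G (j div 2 + 1) - G (j div 2)))"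

lemma dyadic_family_0: "dyadic_family half B 0 j = (if j = 0 then {} else B)"
  by (simp add: dyadic_family_def)

lemma dyadic_family_Suc:
  "dyadic_family half B (Suc n) j = (if even j then dyadic_family half B n (j div 2)
     else dyadic_family half B n (j div 2) \<union>
       half (dyadic_family half B n (j div 2 + 1) - dyadic_family half B n (j div 2)))"
  by (simp add: dyadic_family_def)

lemma dyadic_family_double: "dyadic_family half B (Suc n) (2 * j) = dyadic_family half B n j"
  by (simp add: dyadic_family_Suc)

lemma dyadic_family_bot: "dyadic_family half B n 0 = {}"
  by (induction n) (simp_all add: dyadic_family_0 dyadic_family_Suc)

lemma dyadic_family_top: "dyadic_family half B n (2 ^ n) = B"
  by (induction n) (simp_all add: dyadic_family_0 dyadic_family_Suc)

text \<open>On \<open>B\<close> this is \<open>k / 2 ^ n\<close> for the least \<open>k\<close> with \<open>\<omega> \<in> dyadic_family half B n k\<close>. These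
  levels decrease to a variable that is uniform on \<open>B\<close>.\<close>

definition dyadic_level :: "('a set \<Rightarrow> 'a set) \<Rightarrow> 'a set \<Rightarrow> nat \<Rightarrow> 'a \<Rightarrow> real" where
  "dyadic_level half B n \<omega> = (\<Sum>j<2 ^ n. indicator (B - dyadic_family half B n j) \<omega>) / 2 ^ n"

lemma dyadic_level_outside: "\<omega> \<notin> B \<Longrightarrow> dyadic_level half B n \<omega> = 0"
  by (simp add: dyadic_level_def)

lemma dyadic_squeeze:
  fixes p t c :: real
  assumes lower: "\<And>n. (t - 1 / 2 ^ n) * c \<le> p" and upper: "\<And>n. p \<le> (t + 1 / 2 ^ n) * c"
  shows "p = t * c"
proof -
  have "(\<lambda>n. (t + d / 2 ^ n) * c) \<longlonglongrightarrow> t * c" for d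
    using tendsto_mult_right[OF tendsto_add[OF tendsto_const LIMSEQ_divide_realpow_zero[of 2 d]], of t c]
    by simp
  from this[of "-1"] this[of 1]
  have "(\<lambda>n. (t - 1 / 2 ^ n) * c) \<longlonglongrightarrow> t * c" "(\<lambda>n. (t + 1 / 2 ^ n) * c) \<longlonglongrightarrow> t * c"
    by simp_all
  then have "t * c \<le> p" "p \<le> t * c"
    using lower upper by (auto intro: LIMSEQ_le_const LIMSEQ_le_const2)
  then show ?thesis by simp
qed

text \<open>Values lie in the open unit interval everywhere, not just almost everywhere, because the
  quantile transform below inverts a distribution function only there.\<close>

definition uniform_on :: "'a measure \<Rightarrow> 'a set \<Rightarrow> ('a \<Rightarrow> real) \<Rightarrow> bool" where
  "uniform_on M B V \<longleftrightarrow> V \<in> borel_measurable M \<and> (\<forall>\<omega>. 0 < V \<omega> \<and> V \<omega> < 1) \<and>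
     (\<forall>t. measure M (B \<inter> {\<omega>\<in>space M. V \<omega> \<le> t}) = clamp 0 1 t * measure M B)"

lemma clamp_real_unit: "clamp 0 1 (t::real) = (if t < 0 then 0 else if t \<le> 1 then t else 1)"
  by (simp add: clamp_def)

lemma uniform_onI:
  assumes "B \<subseteq> space M" "V \<in> borel_measurable M" "\<And>\<omega>. 0 < V \<omega> \<and> V \<omega> < 1"
    and cdf: "\<And>t. 0 \<le> t \<Longrightarrow> t \<le> 1 \<Longrightarrow> measure M (B \<inter> {\<omega>\<in>space M. V \<omega> \<le> t}) = t * measure M B"
  shows "uniform_on M B V"
proof -
  have "measure M (B \<inter> {\<omega>\<in>space M. V \<omega> \<le> t}) = clamp 0 1 t * measure M B" for t
  proof -
    consider "t < 0" | "0 \<le> t" "t \<le> 1" | "1 < t" by linarith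
    then show ?thesis
    proof cases
      case 1
      then have "\<not> V \<omega> \<le> t" for \<omega> using assms(3)[of \<omega>] by linarith
      then show ?thesis using 1 by (simp add: clamp_real_unit)
    next
      case 2
      then show ?thesis using cdf by (simp add: clamp_real_unit)
    next
      case 3
      then have "V \<omega> \<le> t" for \<omega> using assms(3)[of \<omega>] by linarith
      then have "B \<inter> {\<omega>\<in>space M. V \<omega> \<le> t} = B" using assms(1) by auto
      then show ?thesis using 3 by (simp add: clamp_real_unit)
    qed
  qed
  with assms(2,3) show ?thesis unfolding uniform_on_def by blast
qed

context finite_measure
begin

context
  fixes half :: "'a set \<Rightarrow> 'a set" and B :: "'a set"
  assumes half: "\<And>E. E \<in> sets M \<Longrightarrow> half E \<in> sets M \<and> half E \<subseteq> E \<and> measure M (half E) = measure M E / 2"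
    and B: "B \<in> sets M"
begin

lemma dyadic_family_sets: "dyadic_family half B n j \<in> sets M \<and> dyadic_family half B n j \<subseteq> B"
proof (induction n arbitrary: j)
  case 0
  then show ?case using B by (simp add: dyadic_family_0)
next
  case (Suc n)
  then have "dyadic_family half B n (j div 2 + 1) - dyadic_family half B n (j div 2) \<in> sets M"
    by auto
  then show ?case using Suc half by (auto simp: dyadic_family_Suc)
qed

lemma dyadic_family_mono: "j \<le> j' \<Longrightarrow> dyadic_family half B n j \<subseteq> dyadic_family half B n j'"
proof (induction n arbitrary: j j')
  case 0
  then show ?case by (simp add: dyadic_family_0)
next
  case (Suc n)
  have "dyadic_family half B (Suc n) j \<subseteq> dyadic_family half B (Suc n) (Suc j)" for j
  proof (cases "even j")
    case True
    then show ?thesis by (simp add: dyadic_family_Suc)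
  next
    case False
    then have "Suc j div 2 = j div 2 + 1" "even (Suc j)" by (auto elim: oddE)
    moreover have "half (dyadic_family half B n (j div 2 + 1) - dyadic_family half B n (j div 2))
        \<subseteq> dyadic_family half B n (j div 2 + 1)"
      using half dyadic_family_sets by blast
    ultimately show ?thesis using False Suc.IH[of "j div 2" "j div 2 + 1"] by (simp add: dyadic_family_Suc)
  qed
  then show ?case using lift_Suc_mono_le[of "dyadic_family half B (Suc n)"] Suc.prems by blast
qed

lemma dyadic_family_measure:
  "j \<le> 2 ^ n \<Longrightarrow> measure M (dyadic_family half B n j) = j / 2 ^ n * measure M B"
proof (induction n arbitrary: j)
  case 0
  then have "j = 0 \<or> j = 1" by auto
  then show ?case by (auto simp: dyadic_family_0)
next
  case (Suc n)
  show ?case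
  proof (cases "even j")
    case True
    then show ?thesis using Suc by (auto simp: dyadic_family_double elim!: evenE)
  next
    case False
    then obtain i where i: "j = 2 * i + 1" by (auto elim: oddE)
    with Suc.prems have "i + 1 \<le> 2 ^ n" by simp
    define D where "D = dyadic_family half B n (i + 1) - dyadic_family half B n i"
    have D: "D \<in> sets M" using dyadic_family_sets by (auto simp: D_def)
    have "measure M D = measure M B / 2 ^ n"
      using \<open>i + 1 \<le> 2 ^ n\<close> dyadic_family_sets dyadic_family_mono[of i "i + 1" n] Suc.IH[of i] Suc.IH[of "i + 1"]
      by (simp add: D_def finite_measure_Diff field_simps)
    moreover have "dyadic_family half B (Suc n) j = dyadic_family half B n i \<union> half D"
      using i by (simp add: dyadic_family_Suc D_def)
    moreover have "measure M (dyadic_family half B n i \<union> half D)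
        = measure M (dyadic_family half B n i) + measure M (half D)"
      using half[OF D] dyadic_family_sets by (intro finite_measure_Union) (auto simp: D_def)
    ultimately show ?thesis
      using Suc.IH[of i] \<open>i + 1 \<le> 2 ^ n\<close> half[OF D] i by (simp add: field_simps)
  qed
qed

lemma dyadic_level_measurable: "dyadic_level half B n \<in> borel_measurable M"
proof -
  have "(\<lambda>\<omega>. indicator (B - dyadic_family half B n j) \<omega> :: real) \<in> borel_measurable M" for j
    using dyadic_family_sets B by (intro borel_measurable_indicator) auto
  then show ?thesis
    unfolding dyadic_level_def by (intro borel_measurable_divide borel_measurable_sum) auto
qed

lemma dyadic_level_rank:
  assumes \<omega>: "\<omega> \<in> B"
  obtains k :: nat where "1 \<le> k" "k \<le> 2 ^ n" "dyadic_level half B n \<omega> = k / 2 ^ n"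
    "\<And>j. \<omega> \<in> dyadic_family half B n j \<longleftrightarrow> k \<le> j"
proof -
  define k where "k = (LEAST j. \<omega> \<in> dyadic_family half B n j)"
  have top: "\<omega> \<in> dyadic_family half B n (2 ^ n)" using \<omega> by (simp add: dyadic_family_top)
  have k: "\<omega> \<in> dyadic_family half B n k" unfolding k_def using top by (rule LeastI)
  have mem: "\<omega> \<in> dyadic_family half B n j \<longleftrightarrow> k \<le> j" for j
  proof
    assume "\<omega> \<in> dyadic_family half B n j"
    then show "k \<le> j" unfolding k_def by (rule Least_le)
  next
    assume "k \<le> j"
    then show "\<omega> \<in> dyadic_family half B n j" using k dyadic_family_mono by blast
  qed
  have "k \<le> 2 ^ n" using mem top by blast
  have "1 \<le> k" using mem[of 0] by (auto simp: dyadic_family_bot)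
  have "(\<Sum>j<2 ^ n. indicator (B - dyadic_family half B n j) \<omega> :: real)
      = (\<Sum>j<2 ^ n. if j < k then 1 else 0)"
    using mem \<omega> by (intro sum.cong) (auto simp: indicator_def)
  also have "\<dots> = (\<Sum>j\<in>{..<2 ^ n} \<inter> {j. j < k}. 1)"
    by (simp add: sum.If_cases)
  also have "{..<2 ^ n} \<inter> {j. j < k} = {..<k}"
    using \<open>k \<le> 2 ^ n\<close> by auto
  finally have "dyadic_level half B n \<omega> = k / 2 ^ n"
    by (simp add: dyadic_level_def)
  from \<open>1 \<le> k\<close> \<open>k \<le> 2 ^ n\<close> this mem show thesis by (rule that)
qed

lemma dyadic_level_Suc:
  "dyadic_level half B (Suc n) \<omega> \<le> dyadic_level half B n \<omega>"
  "dyadic_level half B n \<omega> - 1 / 2 ^ n \<le> dyadic_level half B (Suc n) \<omega> - 1 / 2 ^ Suc n"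
proof -
  have "dyadic_level half B (Suc n) \<omega> \<le> dyadic_level half B n \<omega> \<and>
      dyadic_level half B n \<omega> - 1 / 2 ^ n \<le> dyadic_level half B (Suc n) \<omega> - 1 / 2 ^ Suc n"
  proof (cases "\<omega> \<in> B")
    case True
    obtain k :: nat where k: "1 \<le> k" "k \<le> 2 ^ n" "dyadic_level half B n \<omega> = k / 2 ^ n"
      "\<And>j. \<omega> \<in> dyadic_family half B n j \<longleftrightarrow> k \<le> j"
      by (rule dyadic_level_rank[OF True, where n=n]) (rule that)
    obtain k' :: nat where k': "1 \<le> k'" "k' \<le> 2 ^ Suc n" "dyadic_level half B (Suc n) \<omega> = k' / 2 ^ Suc n"
      "\<And>j. \<omega> \<in> dyadic_family half B (Suc n) j \<longleftrightarrow> k' \<le> j"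
      by (rule dyadic_level_rank[OF True, where n="Suc n"]) (rule that)
    have "k' \<le> 2 * k" using k'(4)[of "2 * k"] k(4)[of k] by (simp add: dyadic_family_double)
    moreover have "\<not> k' \<le> 2 * (k - 1)" using k'(4)[of "2 * (k - 1)"] k(4)[of "k - 1"] k(1)
      by (simp add: dyadic_family_double)
    ultimately have "real k' \<le> 2 * real k" "2 * real k - 2 \<le> real k' - 1" by linarith+
    then have "real k' / 2 ^ Suc n \<le> 2 * real k / 2 ^ Suc n"
      "(2 * real k - 2) / 2 ^ Suc n \<le> (real k' - 1) / 2 ^ Suc n"
      by (simp_all only: divide_right_mono zero_le_power zero_le_numeral)
    moreover have "dyadic_level half B n \<omega> = 2 * real k / 2 ^ Suc n"
      "dyadic_level half B n \<omega> - 1 / 2 ^ n = (2 * real k - 2) / 2 ^ Suc n"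
      "dyadic_level half B (Suc n) \<omega> - 1 / 2 ^ Suc n = (real k' - 1) / 2 ^ Suc n"
      unfolding k(3) k'(3) by (simp_all add: field_simps)
    ultimately show ?thesis unfolding k'(3) by simp
  qed (simp add: dyadic_level_outside field_simps)
  then show "dyadic_level half B (Suc n) \<omega> \<le> dyadic_level half B n \<omega>"
    "dyadic_level half B n \<omega> - 1 / 2 ^ n \<le> dyadic_level half B (Suc n) \<omega> - 1 / 2 ^ Suc n"
    by auto
qed

lemma dyadic_level_sublevel_measure:
  assumes s: "0 \<le> s" "s \<le> 1"
  shows "(s - 1 / 2 ^ n) * measure M B \<le> measure M (B \<inter> {\<omega>\<in>space M. dyadic_level half B n \<omega> \<le> s})"
    and "measure M (B \<inter> {\<omega>\<in>space M. dyadic_level half B n \<omega> \<le> s}) \<le> s * measure M B"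
proof -
  define m where "m = nat \<lfloor>s * 2 ^ n\<rfloor>"
  have m: "real m \<le> s * 2 ^ n" "s * 2 ^ n - 1 < real m"
    using s by (auto simp: m_def)
  moreover have "s * 2 ^ n \<le> 2 ^ n" using s by simp
  ultimately have "real m \<le> 2 ^ n" by linarith
  then have "m \<le> 2 ^ n" by (metis of_nat_le_iff of_nat_numeral of_nat_power)
  have "B \<inter> {\<omega>\<in>space M. dyadic_level half B n \<omega> \<le> s} = dyadic_family half B n m"
  proof -
    have "\<omega> \<in> dyadic_family half B n m \<longleftrightarrow> dyadic_level half B n \<omega> \<le> s" if \<omega>: "\<omega> \<in> B" for \<omega>
    proof -
      obtain k :: nat where k: "1 \<le> k" "k \<le> 2 ^ n" "dyadic_level half B n \<omega> = k / 2 ^ n"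
        "\<And>j. \<omega> \<in> dyadic_family half B n j \<longleftrightarrow> k \<le> j"
        by (rule dyadic_level_rank[OF \<omega>, where n=n]) (rule that)
      have "k \<le> m \<longleftrightarrow> int k \<le> \<lfloor>s * 2 ^ n\<rfloor>"
        unfolding m_def using s by (auto simp: le_nat_iff)
      also have "\<dots> \<longleftrightarrow> real k \<le> s * 2 ^ n"
        by (simp add: le_floor_iff)
      finally have "k \<le> m \<longleftrightarrow> real k \<le> s * 2 ^ n" .
      then show ?thesis unfolding k(3,4) by (simp add: pos_divide_le_eq)
    qed
    then show ?thesis using dyadic_family_sets[of n m] B sets.sets_into_space by blast
  qed
  then have level: "measure M (B \<inter> {\<omega>\<in>space M. dyadic_level half B n \<omega> \<le> s}) = m / 2 ^ n * measure M B"
    using \<open>m \<le> 2 ^ n\<close> by (simp only: dyadic_family_measure)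
  moreover have "s - 1 / 2 ^ n \<le> m / 2 ^ n"
  proof -
    have "(s * 2 ^ n - 1) / 2 ^ n \<le> m / 2 ^ n" using m(2) by (simp add: divide_right_mono)
    then show ?thesis by (simp add: diff_divide_distrib)
  qed
  moreover have "m / 2 ^ n \<le> s" using m(1) by (simp add: pos_divide_le_eq)
  ultimately show "(s - 1 / 2 ^ n) * measure M B \<le> measure M (B \<inter> {\<omega>\<in>space M. dyadic_level half B n \<omega> \<le> s})"
    "measure M (B \<inter> {\<omega>\<in>space M. dyadic_level half B n \<omega> \<le> s}) \<le> s * measure M B"
    unfolding level by (simp_all only: mult_right_mono measure_nonneg)
qed

lemma dyadic_limit:
  obtains U where "U \<in> borel_measurable M"
    "\<And>n \<omega>. U \<omega> \<le> dyadic_level half B n \<omega>" "\<And>n \<omega>. dyadic_level half B n \<omega> - 1 / 2 ^ n \<le> U \<omega>"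
proof -
  define V where "V = dyadic_level half B"
  define U where "U \<omega> = (INF n. V n \<omega>)" for \<omega>
  have bdd: "bdd_below (range (\<lambda>n. V n \<omega>))" for \<omega>
    by (rule bdd_belowI2[of _ 0]) (simp add: V_def dyadic_level_def sum_nonneg)
  have V_U: "(\<lambda>n. V n \<omega>) \<longlonglongrightarrow> U \<omega>" for \<omega>
    unfolding U_def using bdd by (rule LIMSEQ_decseq_INF) (simp add: V_def decseq_SucI dyadic_level_Suc)
  have "U \<omega> \<le> V n \<omega>" for n \<omega>
    unfolding U_def using bdd by (rule cINF_lower) simp
  moreover have "V n \<omega> - 1 / 2 ^ n \<le> U \<omega>" for n \<omega>
  proof (rule LIMSEQ_le_const[OF V_U], intro exI allI impI)
    fix m assume "n \<le> m"
    moreover have "incseq (\<lambda>n. V n \<omega> - 1 / 2 ^ n)"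
      unfolding V_def by (rule incseq_SucI) (rule dyadic_level_Suc(2))
    ultimately have "V n \<omega> - 1 / 2 ^ n \<le> V m \<omega> - 1 / 2 ^ m" by (simp add: incseq_def)
    moreover have "0 \<le> 1 / (2::real) ^ m" by simp
    ultimately show "V n \<omega> - 1 / 2 ^ n \<le> V m \<omega>" by linarith
  qed
  moreover have "U \<in> borel_measurable M"
    using V_U by (rule borel_measurable_LIMSEQ_real) (simp add: V_def dyadic_level_measurable)
  ultimately show thesis unfolding V_def by (intro that)
qed

lemma dyadic_uniform:
  obtains U where "U \<in> borel_measurable M"
    "\<And>t. 0 \<le> t \<Longrightarrow> t \<le> 1 \<Longrightarrow> measure M (B \<inter> {\<omega>\<in>space M. U \<omega> \<le> t}) = t * measure M B"
proof -
  obtain U where U_meas: "U \<in> borel_measurable M"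
    and U_le: "\<And>n \<omega>. U \<omega> \<le> dyadic_level half B n \<omega>"
    and U_ge: "\<And>n \<omega>. dyadic_level half B n \<omega> - 1 / 2 ^ n \<le> U \<omega>"
    by (rule dyadic_limit) (rule that)
  have "measure M (B \<inter> {\<omega>\<in>space M. U \<omega> \<le> t}) = t * measure M B" if t: "0 \<le> t" "t \<le> 1" for t
  proof (rule dyadic_squeeze)
    define P where "P = B \<inter> {\<omega>\<in>space M. U \<omega> \<le> t}"
    have P: "P \<in> sets M" unfolding P_def using B U_meas by measurable
    show "(t - 1 / 2 ^ n) * measure M B \<le> measure M P" for n
    proof -
      have "B \<inter> {\<omega>\<in>space M. dyadic_level half B n \<omega> \<le> t} \<subseteq> P"
        unfolding P_def using U_le order_trans by blast
      then show ?thesis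
        using dyadic_level_sublevel_measure(1)[OF t, of n] finite_measure_mono[OF _ P] by (meson order_trans)
    qed
    show "measure M P \<le> (t + 1 / 2 ^ n) * measure M B" for n
    proof (cases "t + 1 / 2 ^ n \<le> 1")
      case True
      have "dyadic_level half B n \<omega> \<le> t + 1 / 2 ^ n" if "U \<omega> \<le> t" for \<omega>
        using U_ge[of n \<omega>] that by linarith
      then have "P \<subseteq> B \<inter> {\<omega>\<in>space M. dyadic_level half B n \<omega> \<le> t + 1 / 2 ^ n}"
        unfolding P_def by auto
      moreover have "B \<inter> {\<omega>\<in>space M. dyadic_level half B n \<omega> \<le> t + 1 / 2 ^ n} \<in> sets M"
        using B dyadic_level_measurable[of n] by measurable
      ultimately have "measure M P \<le> measure M (B \<inter> {\<omega>\<in>space M. dyadic_level half B n \<omega> \<le> t + 1 / 2 ^ n})"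
        by (rule finite_measure_mono)
      also have "\<dots> \<le> (t + 1 / 2 ^ n) * measure M B"
        using t True by (intro dyadic_level_sublevel_measure(2)) auto
      finally show ?thesis .
    next
      case False
      have "measure M P \<le> measure M B" unfolding P_def using B by (intro finite_measure_mono) auto
      also have "\<dots> \<le> (t + 1 / 2 ^ n) * measure M B"
        using False mult_right_mono[of 1 "t + 1 / 2 ^ n" "measure M B"] by simp
      finally show ?thesis .
    qed
  qed
  with U_meas show thesis by (rule that)
qed

end

lemma unit_cdf_boundary_null:
  assumes U: "U \<in> borel_measurable M" and B: "B \<in> sets M"
    and cdf: "\<And>t. 0 \<le> t \<Longrightarrow> t \<le> 1 \<Longrightarrow> measure M (B \<inter> {\<omega>\<in>space M. U \<omega> \<le> t}) = t * measure M B"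
  shows "B \<inter> {\<omega>\<in>space M. U \<omega> \<le> 0 \<or> 1 \<le> U \<omega>} \<in> null_sets M"
proof -
  have sets: "B \<inter> {\<omega>\<in>space M. U \<omega> \<le> t} \<in> sets M" "B \<inter> {\<omega>\<in>space M. t \<le> U \<omega>} \<in> sets M" for t
    using U B by measurable
  have "measure M (B \<inter> {\<omega>\<in>space M. 1 \<le> U \<omega>}) \<le> measure M B / 2 ^ n" for n
  proof -
    have "0 < 1 / (2::real) ^ n" by simp
    then have "\<not> U \<omega> \<le> 1 - 1 / 2 ^ n" if "1 \<le> U \<omega>" for \<omega> using that by linarith
    then have "B \<inter> {\<omega>\<in>space M. 1 \<le> U \<omega>} \<subseteq> B - B \<inter> {\<omega>\<in>space M. U \<omega> \<le> 1 - 1 / 2 ^ n}"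
      by auto
    then have "measure M (B \<inter> {\<omega>\<in>space M. 1 \<le> U \<omega>})
        \<le> measure M B - measure M (B \<inter> {\<omega>\<in>space M. U \<omega> \<le> 1 - 1 / 2 ^ n})"
      using finite_measure_mono[OF _ sets.Diff[OF B sets(1)]] finite_measure_Diff[OF B sets(1)] by auto
    also have "\<dots> = measure M B / 2 ^ n"
      by (subst cdf) (simp_all add: field_simps)
    finally show ?thesis .
  qed
  then have "measure M (B \<inter> {\<omega>\<in>space M. 1 \<le> U \<omega>}) \<le> 0"
    by (intro LIMSEQ_le_const[OF LIMSEQ_divide_realpow_zero[of 2 "measure M B"]]) auto
  moreover have "measure M (B \<inter> {\<omega>\<in>space M. U \<omega> \<le> 0}) = 0"
    using cdf[of 0] by simp
  moreover have split: "B \<inter> {\<omega>\<in>space M. U \<omega> \<le> 0 \<or> 1 \<le> U \<omega>}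
      = (B \<inter> {\<omega>\<in>space M. U \<omega> \<le> 0}) \<union> (B \<inter> {\<omega>\<in>space M. 1 \<le> U \<omega>})"
    by auto
  ultimately have "B \<inter> {\<omega>\<in>space M. U \<omega> \<le> 0} \<in> null_sets M" "B \<inter> {\<omega>\<in>space M. 1 \<le> U \<omega>} \<in> null_sets M"
    using sets measure_nonneg[of M "B \<inter> {\<omega>\<in>space M. 1 \<le> U \<omega>}"]
    by (auto simp: null_sets_def emeasure_eq_measure)
  then show ?thesis unfolding split by (rule null_sets.Un)
qed

lemma nonatomic_halving:
  assumes na: "nonatomic M"
  obtains half where
    "\<And>E. E \<in> sets M \<Longrightarrow> half E \<in> sets M \<and> half E \<subseteq> E \<and> measure M (half E) = measure M E / 2"
proof -
  define half where "half E = (SOME H. H \<in> sets M \<and> H \<subseteq> E \<and> measure M H = measure M E / 2)" for E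
  have "half E \<in> sets M \<and> half E \<subseteq> E \<and> measure M (half E) = measure M E / 2" if E: "E \<in> sets M" for E
  proof -
    obtain H where "H \<in> sets M" "H \<subseteq> E" "measure M H = measure M E / 2"
      by (rule nonatomic_subset_measure[OF na E, of "measure M E / 2"]) auto
    then have "\<exists>H. H \<in> sets M \<and> H \<subseteq> E \<and> measure M H = measure M E / 2" by blast
    then show ?thesis unfolding half_def by (rule someI_ex)
  qed
  then show thesis by (rule that)
qed

lemma nonatomic_conditional_uniform:
  assumes na: "nonatomic M" and B: "B \<in> sets M"
  obtains V where "uniform_on M B V"
proof -
  obtain half where half:
    "\<And>E. E \<in> sets M \<Longrightarrow> half E \<in> sets M \<and> half E \<subseteq> E \<and> measure M (half E) = measure M E / 2"
    by (rule nonatomic_halving[OF na]) (rule that)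
  obtain U where U: "U \<in> borel_measurable M"
    and cdf: "\<And>t. 0 \<le> t \<Longrightarrow> t \<le> 1 \<Longrightarrow> measure M (B \<inter> {\<omega>\<in>space M. U \<omega> \<le> t}) = t * measure M B"
    by (rule dyadic_uniform[of half B, OF _ B]) (rule half, assumption, rule that)
  define N where "N = B \<inter> {\<omega>\<in>space M. U \<omega> \<le> 0 \<or> 1 \<le> U \<omega>}"
  have N: "N \<in> null_sets M" unfolding N_def using U B cdf by (rule unit_cdf_boundary_null)
  define V where "V \<omega> = (if 0 < U \<omega> \<and> U \<omega> < 1 then U \<omega> else 1 / 2)" for \<omega>
  have V: "V \<in> borel_measurable M" unfolding V_def using U by measurable
  have V01: "0 < V \<omega> \<and> V \<omega> < 1" for \<omega> by (simp add: V_def)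
  have "measure M (B \<inter> {\<omega>\<in>space M. V \<omega> \<le> t}) = t * measure M B" if "0 \<le> t" "t \<le> 1" for t
  proof -
    have sets: "B \<inter> {\<omega>\<in>space M. V \<omega> \<le> t} \<in> sets M" "B \<inter> {\<omega>\<in>space M. U \<omega> \<le> t} \<in> sets M"
      using B U V by measurable
    have "B \<inter> {\<omega>\<in>space M. V \<omega> \<le> t} - N = B \<inter> {\<omega>\<in>space M. U \<omega> \<le> t} - N"
      unfolding N_def V_def by auto
    then have "measure M (B \<inter> {\<omega>\<in>space M. V \<omega> \<le> t}) = measure M (B \<inter> {\<omega>\<in>space M. U \<omega> \<le> t})"
      using measure_Diff_null_set[OF sets(1) N] measure_Diff_null_set[OF sets(2) N] by simp
    then show ?thesis using that cdf by simp
  qed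
  with sets.sets_into_space[OF B] V V01 have "uniform_on M B V" by (rule uniform_onI)
  then show thesis by (rule that)
qed

end

section \<open>Rearrangements\<close>

lemma (in prob_space) uniform_on_glue:
  assumes C: "C \<in> sets M" "prob C = a" and a: "0 < a" "a < 1"
    and VC: "uniform_on M C VC" and VD: "uniform_on M (space M - C) VD"
  shows "uniform_on M (space M) (\<lambda>\<omega>. if \<omega> \<in> C then a * VC \<omega> else a + (1 - a) * VD \<omega>)"
    (is "uniform_on M (space M) ?U")
proof (rule uniform_onI)
  have VC': "VC \<in> borel_measurable M" "\<And>\<omega>. 0 < VC \<omega> \<and> VC \<omega> < 1"
    "\<And>t. measure M (C \<inter> {\<omega>\<in>space M. VC \<omega> \<le> t}) = clamp 0 1 t * a"
    using VC C by (simp_all add: uniform_on_def)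
  have VD': "VD \<in> borel_measurable M" "\<And>\<omega>. 0 < VD \<omega> \<and> VD \<omega> < 1"
    "\<And>t. measure M ((space M - C) \<inter> {\<omega>\<in>space M. VD \<omega> \<le> t}) = clamp 0 1 t * (1 - a)"
    using VD C by (simp_all add: uniform_on_def prob_compl)
  show "space M \<subseteq> space M" ..
  show "?U \<in> borel_measurable M" using C VC'(1) VD'(1) by measurable
  show "0 < ?U \<omega> \<and> ?U \<omega> < 1" for \<omega>
  proof (cases "\<omega> \<in> C")
    case True
    have "a * VC \<omega> < a" "0 < a * VC \<omega>"
      using mult_strict_left_mono[of "VC \<omega>" 1 a] VC'(2)[of \<omega>] a by simp_all
    moreover have "?U \<omega> = a * VC \<omega>" using True by simp
    ultimately show ?thesis using a by linarith
  next
    case False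
    have "(1 - a) * VD \<omega> < 1 - a" "0 \<le> (1 - a) * VD \<omega>"
      using mult_strict_left_mono[of "VD \<omega>" 1 "1 - a"] VD'(2)[of \<omega>] a by simp_all
    moreover have "?U \<omega> = a + (1 - a) * VD \<omega>" using False by simp
    ultimately show ?thesis using a by linarith
  qed
  fix x :: real assume x: "0 \<le> x" "x \<le> 1"
  have "a * VC \<omega> \<le> x \<longleftrightarrow> VC \<omega> \<le> x / a" for \<omega>
    using a by (simp add: pos_le_divide_eq mult.commute)
  moreover have "a + (1 - a) * VD \<omega> \<le> x \<longleftrightarrow> VD \<omega> \<le> (x - a) / (1 - a)" for \<omega>
    using a by (simp add: pos_le_divide_eq mult.commute le_diff_eq add.commute)
  ultimately have split: "{\<omega>\<in>space M. ?U \<omega> \<le> x}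
      = (C \<inter> {\<omega>\<in>space M. VC \<omega> \<le> x / a}) \<union> ((space M - C) \<inter> {\<omega>\<in>space M. VD \<omega> \<le> (x - a) / (1 - a)})"
    using sets.sets_into_space[OF C(1)] by auto
  have "C \<inter> {\<omega>\<in>space M. VC \<omega> \<le> x / a} \<in> sets M"
    "(space M - C) \<inter> {\<omega>\<in>space M. VD \<omega> \<le> (x - a) / (1 - a)} \<in> sets M"
    using C VC'(1) VD'(1) by measurable
  then have "measure M {\<omega>\<in>space M. ?U \<omega> \<le> x}
      = measure M (C \<inter> {\<omega>\<in>space M. VC \<omega> \<le> x / a})
        + measure M ((space M - C) \<inter> {\<omega>\<in>space M. VD \<omega> \<le> (x - a) / (1 - a)})"
    unfolding split by (intro finite_measure_Union) auto
  also have "\<dots> = clamp 0 1 (x / a) * a + clamp 0 1 ((x - a) / (1 - a)) * (1 - a)"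
    using VC'(3) VD'(3) by simp
  also have "\<dots> = x"
  proof (cases "x \<le> a")
    case True
    then have "0 \<le> x / a" "x / a \<le> 1" "(x - a) / (1 - a) \<le> 0"
      using x a by (simp_all add: divide_le_eq_1 divide_nonpos_pos)
    then have "clamp 0 1 (x / a) = x / a" "clamp 0 1 ((x - a) / (1 - a)) = 0"
      unfolding clamp_real_unit by auto
    then show ?thesis using a by simp
  next
    case False
    then have "1 < x / a" "0 \<le> (x - a) / (1 - a)" "(x - a) / (1 - a) \<le> 1"
      using x a by (simp_all add: divide_le_eq_1 less_divide_eq_1)
    then have "clamp 0 1 (x / a) = 1" "clamp 0 1 ((x - a) / (1 - a)) = (x - a) / (1 - a)"
      unfolding clamp_real_unit by auto
    then show ?thesis using a by simp
  qed
  finally show "measure M (space M \<inter> {\<omega>\<in>space M. ?U \<omega> \<le> x}) = x * measure M (space M)"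
    by (simp add: prob_space Int_absorb1)
qed

definition quantile :: "real measure \<Rightarrow> real \<Rightarrow> real" where
  "quantile \<mu> w = Inf {x. w \<le> cdf \<mu> x}"

lemma quantile_le_iff:
  assumes "real_distribution \<mu>" "0 < w" "w < 1"
  shows "quantile \<mu> w \<le> x \<longleftrightarrow> w \<le> cdf \<mu> x"
proof -
  interpret cdf_distribution \<mu> using assms(1) by (simp add: cdf_distribution_def)
  show ?thesis unfolding quantile_def by (rule pseudoinverse[OF assms(2,3), symmetric])
qed

lemma quantile_mono:
  assumes "real_distribution \<mu>" "0 < w" "w \<le> w'" "w' < 1"
  shows "quantile \<mu> w \<le> quantile \<mu> w'"
proof -
  have "w' \<le> cdf \<mu> (quantile \<mu> w')"
    using quantile_le_iff[OF assms(1) _ assms(4), of "quantile \<mu> w'"] assms(2,3) by simp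
  then show ?thesis
    using quantile_le_iff[OF assms(1,2) le_less_trans[OF assms(3,4)], of "quantile \<mu> w'"] assms(3) by simp
qed

lemma quantile_measurable:
  assumes "real_distribution \<mu>" "U \<in> borel_measurable M" "\<And>\<omega>. 0 < U \<omega> \<and> U \<omega> < 1"
  shows "(\<lambda>\<omega>. quantile \<mu> (U \<omega>)) \<in> borel_measurable M"
proof -
  interpret cdf_distribution \<mu> using assms(1) by (simp add: cdf_distribution_def)
  have "U \<in> measurable M (restrict_space borel {0<..<1})"
    using assms(2,3) by (intro measurable_restrict_space2) auto
  from measurable_compose[OF this measurable_CI] show ?thesis by (simp add: quantile_def)
qed

lemma (in prob_space) uniform_on_quantile_same_law:
  assumes U: "uniform_on M (space M) U" and X: "X \<in> borel_measurable M"
  shows "same_law M X (\<lambda>\<omega>. quantile (distr M borel X) (U \<omega>))"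
proof -
  define \<mu> where "\<mu> = distr M borel X"
  have \<mu>: "real_distribution \<mu>" unfolding \<mu>_def using X by simp
  interpret \<mu>: real_distribution \<mu> by (fact \<mu>)
  have U01: "0 < U \<omega> \<and> U \<omega> < 1" for \<omega> using U by (simp add: uniform_on_def)
  have Y: "(\<lambda>\<omega>. quantile \<mu> (U \<omega>)) \<in> borel_measurable M"
    using U by (intro quantile_measurable[OF \<mu>]) (simp_all add: uniform_on_def)
  have "cdf (distr M borel (\<lambda>\<omega>. quantile \<mu> (U \<omega>))) x = cdf \<mu> x" for x
  proof -
    have "(\<lambda>\<omega>. quantile \<mu> (U \<omega>)) -` {..x} \<inter> space M = space M \<inter> {\<omega>\<in>space M. U \<omega> \<le> cdf \<mu> x}"
      using quantile_le_iff[OF \<mu>] U01 by auto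
    moreover have "0 \<le> cdf \<mu> x" "cdf \<mu> x \<le> 1"
      by (simp_all add: \<mu>.cdf_nonneg \<mu>.cdf_bounded_prob)
    ultimately show ?thesis
      using U Y by (simp add: cdf_def measure_distr uniform_on_def clamp_real_unit prob_space)
  qed
  then have "distr M borel (\<lambda>\<omega>. quantile \<mu> (U \<omega>)) = \<mu>"
    using Y \<mu> by (intro cdf_unique) auto
  then show ?thesis using X Y unfolding same_law_def \<mu>_def by simp
qed

lemma same_law_integrable:
  assumes "same_law M X Y" "integrable M X"
  shows "integrable M Y"
proof -
  have X: "X \<in> borel_measurable M" and Y: "Y \<in> borel_measurable M"
    and XY: "distr M borel X = distr M borel Y" using assms(1) by (auto simp: same_law_def)
  have "integrable (distr M borel Y) (\<lambda>x. x)"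
    unfolding XY[symmetric] using integrable_distr_eq[OF X, of "\<lambda>x. x"] assms(2) by simp
  then show ?thesis using integrable_distr_eq[OF Y, of "\<lambda>x. x"] by simp
qed

lemma same_law_integral:
  assumes "same_law M X Y"
  shows "integral\<^sup>L M X = integral\<^sup>L M Y"
proof -
  have X: "X \<in> borel_measurable M" and Y: "Y \<in> borel_measurable M"
    and XY: "distr M borel X = distr M borel Y" using assms by (auto simp: same_law_def)
  have "integral\<^sup>L M X = integral\<^sup>L (distr M borel X) (\<lambda>x. x)"
    using integral_distr[OF X, of "\<lambda>x. x"] by simp
  also have "\<dots> = integral\<^sup>L M Y"
    unfolding XY using integral_distr[OF Y, of "\<lambda>x. x"] by simp
  finally show ?thesis .
qed

lemma same_law_cmult:
  assumes "same_law M X Y"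
  shows "same_law M (\<lambda>\<omega>. c * X \<omega>) (\<lambda>\<omega>. c * Y \<omega>)"
proof -
  have X: "X \<in> borel_measurable M" and Y: "Y \<in> borel_measurable M"
    and XY: "distr M borel X = distr M borel Y" using assms by (auto simp: same_law_def)
  have "distr M borel (\<lambda>\<omega>. c * X \<omega>) = distr (distr M borel X) borel (\<lambda>x. c * x)"
    using X by (subst distr_distr) (auto simp: comp_def)
  also have "\<dots> = distr M borel (\<lambda>\<omega>. c * Y \<omega>)"
    using Y unfolding XY by (subst distr_distr) (auto simp: comp_def)
  finally show ?thesis using X Y by (simp add: same_law_def)
qed

lemma integral_pos_if_pos_on:
  fixes f :: "'a \<Rightarrow> real"
  assumes f: "integrable M f" "AE \<omega> in M. 0 \<le> f \<omega>"
    and P: "P \<in> sets M" "0 < measure M P" "\<And>\<omega>. \<omega> \<in> P \<Longrightarrow> 0 < f \<omega>"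
  shows "0 < integral\<^sup>L M f"
proof -
  have "integral\<^sup>L M f \<noteq> 0"
  proof
    assume "integral\<^sup>L M f = 0"
    then have "AE \<omega> in M. f \<omega> = 0" using integral_nonneg_eq_0_iff_AE[OF f] by simp
    then have "AE \<omega> in M. \<omega> \<notin> P" by eventually_elim (use P(3) in force)
    then have "P \<in> null_sets M" using AE_iff_null_sets[OF P(1)] by simp
    then show False using P(2) by (simp add: measure_def null_setsD1)
  qed
  moreover have "0 \<le> integral\<^sup>L M f" using f(2) by (rule integral_nonneg_AE)
  ultimately show ?thesis by simp
qed

context prob_space
begin

lemma AE_not_in_if_prob_0: "A \<in> events \<Longrightarrow> prob A = 0 \<Longrightarrow> AE \<omega> in M. \<omega> \<notin> A"
  by (intro AE_not_in) (simp add: null_sets_def emeasure_eq_measure)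

lemma prob_split_at_expectation:
  fixes Q :: "'a \<Rightarrow> real"
  assumes Q: "integrable M Q" and nc: "\<not> (\<exists>c. AE \<omega> in M. Q \<omega> = c)"
  shows "0 < prob {\<omega>\<in>space M. expectation Q < Q \<omega>}" "0 < prob {\<omega>\<in>space M. Q \<omega> \<le> expectation Q}"
proof -
  let ?e = "expectation Q"
  have Qm[measurable]: "Q \<in> borel_measurable M" using Q by simp
  have "AE \<omega> in M. Q \<omega> = ?e" if "AE \<omega> in M. 0 \<le> s * (Q \<omega> - ?e)" "s \<noteq> 0" for s
  proof -
    have "integral\<^sup>L M (\<lambda>\<omega>. s * (Q \<omega> - ?e)) = 0"
      using Q prob_space by (simp add: right_diff_distrib)
    then have "AE \<omega> in M. s * (Q \<omega> - ?e) = 0"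
      using integral_nonneg_eq_0_iff_AE[OF _ that(1)] Q by simp
    then show ?thesis by (rule eventually_mono) (use that(2) in simp)
  qed
  moreover have "AE \<omega> in M. 0 \<le> (-1) * (Q \<omega> - ?e)" if "prob {\<omega>\<in>space M. ?e < Q \<omega>} = 0"
    using AE_not_in_if_prob_0[OF _ that] by (auto elim!: eventually_mono)
  moreover have "AE \<omega> in M. 0 \<le> 1 * (Q \<omega> - ?e)" if "prob {\<omega>\<in>space M. Q \<omega> \<le> ?e} = 0"
    using AE_not_in_if_prob_0[OF _ that] by (auto elim!: eventually_mono)
  ultimately show "0 < prob {\<omega>\<in>space M. expectation Q < Q \<omega>}" "0 < prob {\<omega>\<in>space M. Q \<omega> \<le> expectation Q}"
    using nc by (metis zero_less_measure_iff less_le measure_nonneg one_neq_zero neg_equal_0_iff_equal zero_neq_one)+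
qed

text \<open>\<open>U1\<close> places \<open>C\<close> at the bottom of the unit interval and \<open>U2\<close> at the top.\<close>

lemma nonatomic_opposite_uniforms:
  assumes na: "nonatomic M" and C: "C \<in> events" "prob C = a" and a: "0 < a" "a < 1"
    and b: "0 < b" "b < 1"
  obtains U1 U2 where "uniform_on M (space M) U1" "uniform_on M (space M) U2"
    "\<And>\<omega>. \<omega> \<in> C \<Longrightarrow> U1 \<omega> \<le> U2 \<omega>" "\<And>\<omega>. \<omega> \<in> space M - C \<Longrightarrow> U2 \<omega> \<le> U1 \<omega>"
    "0 < prob {\<omega>\<in>space M - C. U2 \<omega> \<le> b \<and> b < U1 \<omega>}"
proof -
  define D where "D = space M - C"
  have D: "D \<in> events" "prob D = 1 - a" "space M - D = C"
    using C sets.sets_into_space[OF C(1)] by (auto simp: D_def prob_compl)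
  obtain VC where VC: "uniform_on M C VC"
    by (rule nonatomic_conditional_uniform[OF na C(1)])
  obtain VD where VD: "uniform_on M D VD"
    by (rule nonatomic_conditional_uniform[OF na D(1)])
  define U1 where "U1 \<omega> = (if \<omega> \<in> C then a * VC \<omega> else a + (1 - a) * VD \<omega>)" for \<omega>
  define U2 where "U2 \<omega> = (if \<omega> \<in> D then (1 - a) * VD \<omega> else (1 - a) + (1 - (1 - a)) * VC \<omega>)" for \<omega>
  have "uniform_on M (space M) U1"
    unfolding U1_def using uniform_on_glue[OF C a VC] VD by (simp add: D_def)
  moreover have "uniform_on M (space M) U2"
    unfolding U2_def using uniform_on_glue[OF D(1,2) _ _ VD] VC a by (simp add: D(3))
  moreover have "U1 \<omega> \<le> U2 \<omega>" if "\<omega> \<in> C" for \<omega>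
    using that a by (simp add: U1_def U2_def D_def)
  moreover have "U2 \<omega> \<le> U1 \<omega>" if "\<omega> \<in> D" for \<omega>
    using that a by (simp add: U1_def U2_def D_def)
  moreover have "0 < prob {\<omega>\<in>D. U2 \<omega> \<le> b \<and> b < U1 \<omega>}"
  proof -
    define s1 where "s1 = (b - a) / (1 - a)"
    define s2 where "s2 = b / (1 - a)"
    have VD': "VD \<in> borel_measurable M" "\<And>t. prob (D \<inter> {\<omega>\<in>space M. VD \<omega> \<le> t}) = clamp 0 1 t * (1 - a)"
      using VD D(2) by (simp_all add: uniform_on_def)
    have "{\<omega>\<in>D. U2 \<omega> \<le> b \<and> b < U1 \<omega>}
        = D \<inter> {\<omega>\<in>space M. VD \<omega> \<le> s2} - D \<inter> {\<omega>\<in>space M. VD \<omega> \<le> s1}"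
      using a D(1)[THEN sets.sets_into_space]
      by (auto simp: U1_def U2_def D_def s1_def s2_def pos_le_divide_eq pos_divide_le_eq mult.commute not_le algebra_simps)
    also have "prob \<dots> = (clamp 0 1 s2 - clamp 0 1 s1) * (1 - a)"
    proof -
      have "s1 \<le> s2" using a by (simp add: s1_def s2_def divide_right_mono)
      then have "D \<inter> {\<omega>\<in>space M. VD \<omega> \<le> s1} \<subseteq> D \<inter> {\<omega>\<in>space M. VD \<omega> \<le> s2}" by auto
      moreover have "D \<inter> {\<omega>\<in>space M. VD \<omega> \<le> t} \<in> events" for t using D(1) VD'(1) by measurable
      ultimately show ?thesis using VD'(2) by (simp add: finite_measure_Diff left_diff_distrib)
    qed
    also have "0 < \<dots>"
    proof -
      have "s1 < s2" "s1 < 1" "0 < s2"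
        using a b by (simp_all add: s1_def s2_def divide_strict_right_mono divide_less_eq)
      then have "clamp 0 1 s1 < clamp 0 1 s2" unfolding clamp_real_unit by auto
      then show ?thesis using a by simp
    qed
    finally show ?thesis .
  qed
  ultimately show thesis unfolding D_def by (rule that)
qed

lemma nonatomic_opposite_rearrangements:
  fixes X :: "'a \<Rightarrow> real"
  assumes na: "nonatomic M" and X[measurable]: "X \<in> borel_measurable M"
    and t: "0 < prob {\<omega>\<in>space M. X \<omega> \<le> t}" "prob {\<omega>\<in>space M. X \<omega> \<le> t} < 1"
    and C: "C \<in> events" "0 < prob C" "prob C < 1"
  obtains Y Z where "same_law M X Y" "same_law M X Z"
    "\<And>\<omega>. \<omega> \<in> C \<Longrightarrow> Y \<omega> \<le> Z \<omega>" "\<And>\<omega>. \<omega> \<in> space M - C \<Longrightarrow> Z \<omega> \<le> Y \<omega>"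
    "0 < prob {\<omega>\<in>space M - C. Z \<omega> \<le> t \<and> t < Y \<omega>}"
proof -
  define \<mu> where "\<mu> = distr M borel X"
  define b where "b = cdf \<mu> t"
  have \<mu>: "real_distribution \<mu>" unfolding \<mu>_def by simp
  have "b = prob {\<omega>\<in>space M. X \<omega> \<le> t}"
    by (simp add: b_def \<mu>_def cdf_def measure_distr vimage_def Int_def conj_commute)
  with t have b: "0 < b" "b < 1" by simp_all
  obtain U1 U2 where U1: "uniform_on M (space M) U1" and U2: "uniform_on M (space M) U2"
    and on_C: "\<And>\<omega>. \<omega> \<in> C \<Longrightarrow> U1 \<omega> \<le> U2 \<omega>" and off_C: "\<And>\<omega>. \<omega> \<in> space M - C \<Longrightarrow> U2 \<omega> \<le> U1 \<omega>"
    and P: "0 < prob {\<omega>\<in>space M - C. U2 \<omega> \<le> b \<and> b < U1 \<omega>}"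
    by (rule nonatomic_opposite_uniforms[OF na C(1) refl C(2,3) b]) (rule that)
  have U01: "0 < U1 \<omega> \<and> U1 \<omega> < 1" "0 < U2 \<omega> \<and> U2 \<omega> < 1" for \<omega>
    using U1 U2 by (simp_all add: uniform_on_def)
  define Y where "Y \<omega> = quantile \<mu> (U1 \<omega>)" for \<omega>
  define Z where "Z \<omega> = quantile \<mu> (U2 \<omega>)" for \<omega>
  have laws: "same_law M X Y" "same_law M X Z"
    unfolding Y_def Z_def \<mu>_def using uniform_on_quantile_same_law U1 U2 X by blast+
  then have [measurable]: "Y \<in> borel_measurable M" "Z \<in> borel_measurable M"
    by (simp_all add: same_law_def)
  have "{\<omega>\<in>space M - C. U2 \<omega> \<le> b \<and> b < U1 \<omega>} \<subseteq> {\<omega>\<in>space M - C. Z \<omega> \<le> t \<and> t < Y \<omega>}"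
    unfolding Y_def Z_def b_def using quantile_le_iff[OF \<mu>] U01 by (auto simp: not_le[symmetric])
  moreover have "{\<omega>\<in>space M - C. Z \<omega> \<le> t \<and> t < Y \<omega>} \<in> events"
  proof -
    have "{\<omega>\<in>space M. Z \<omega> \<le> t \<and> t < Y \<omega>} \<in> events" by measurable
    moreover have "{\<omega>\<in>space M - C. Z \<omega> \<le> t \<and> t < Y \<omega>}
        = (space M - C) \<inter> {\<omega>\<in>space M. Z \<omega> \<le> t \<and> t < Y \<omega>}" by blast
    ultimately show ?thesis using C(1) by auto
  qed
  ultimately have "0 < prob {\<omega>\<in>space M - C. Z \<omega> \<le> t \<and> t < Y \<omega>}"
    using P finite_measure_mono by (blast intro: less_le_trans)
  moreover have "Y \<omega> \<le> Z \<omega>" if "\<omega> \<in> C" for \<omega>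
    unfolding Y_def Z_def using on_C[OF that] U01 by (intro quantile_mono[OF \<mu>]) auto
  moreover have "Z \<omega> \<le> Y \<omega>" if "\<omega> \<in> space M - C" for \<omega>
    unfolding Y_def Z_def using off_C[OF that] U01 by (intro quantile_mono[OF \<mu>]) auto
  ultimately show thesis using laws by (intro that[of Y Z]) auto
qed

text \<open>With \<open>Y\<close> and \<open>Z\<close> arranged with and against \<open>Q\<close>, the product \<open>(Y - Z) (Q - E Q)\<close> is
  nonnegative, and positive on a set of positive probability.\<close>

lemma nonatomic_rearrangement_pairing:
  fixes X Q :: "'a \<Rightarrow> real"
  assumes na: "nonatomic M"
    and X: "integrable M X" "\<not> (\<exists>c. AE \<omega> in M. X \<omega> = c)"
    and Q: "integrable M Q" "\<not> (\<exists>c. AE \<omega> in M. Q \<omega> = c)"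
    and XQ: "\<And>Y. same_law M X Y \<Longrightarrow> integrable M (\<lambda>\<omega>. Y \<omega> * Q \<omega>)"
  obtains Y Z where "same_law M X Y" "same_law M X Z"
    "(\<integral>\<omega>. Y \<omega> * Q \<omega> \<partial>M) \<noteq> (\<integral>\<omega>. Z \<omega> * Q \<omega> \<partial>M)"
proof -
  define u where "u = expectation Q"
  define C where "C = {\<omega>\<in>space M. Q \<omega> \<le> u}"
  define t where "t = expectation X"
  have Xm[measurable]: "X \<in> borel_measurable M" and Qm[measurable]: "Q \<in> borel_measurable M"
    using X Q by simp_all
  have C_events: "C \<in> events" unfolding C_def by measurable
  moreover have "space M - C = {\<omega>\<in>space M. u < Q \<omega>}" by (auto simp: C_def)
  ultimately have C: "C \<in> events" "0 < prob C" "prob C < 1"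
    using prob_split_at_expectation[OF Q] prob_compl[OF C_events] by (simp_all add: C_def u_def)
  have "{\<omega>\<in>space M. X \<omega> \<le> t} \<in> events" by measurable
  moreover have "space M - {\<omega>\<in>space M. X \<omega> \<le> t} = {\<omega>\<in>space M. t < X \<omega>}" by auto
  ultimately have t: "0 < prob {\<omega>\<in>space M. X \<omega> \<le> t}" "prob {\<omega>\<in>space M. X \<omega> \<le> t} < 1"
    using prob_split_at_expectation[OF X] prob_compl[of "{\<omega>\<in>space M. X \<omega> \<le> t}"]
    by (simp_all add: t_def)
  obtain Y Z where laws: "same_law M X Y" "same_law M X Z"
    and on_C: "\<And>\<omega>. \<omega> \<in> C \<Longrightarrow> Y \<omega> \<le> Z \<omega>" and off_C: "\<And>\<omega>. \<omega> \<in> space M - C \<Longrightarrow> Z \<omega> \<le> Y \<omega>"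
    and P: "0 < prob {\<omega>\<in>space M - C. Z \<omega> \<le> t \<and> t < Y \<omega>}"
    by (rule nonatomic_opposite_rearrangements[OF na Xm t C]) (rule that)
  have int: "integrable M Y" "integrable M Z" "integrable M (\<lambda>\<omega>. Y \<omega> * Q \<omega>)" "integrable M (\<lambda>\<omega>. Z \<omega> * Q \<omega>)"
    using laws same_law_integrable X(1) XQ by blast+
  then have [measurable]: "Y \<in> borel_measurable M" "Z \<in> borel_measurable M" by simp_all
  define f where "f \<omega> = (Y \<omega> - Z \<omega>) * (Q \<omega> - u)" for \<omega>
  have f_eq: "f = (\<lambda>\<omega>. (Y \<omega> * Q \<omega> - Z \<omega> * Q \<omega>) - (u * Y \<omega> - u * Z \<omega>))"
    by (auto simp: f_def algebra_simps)
  have "integral\<^sup>L M f = (\<integral>\<omega>. Y \<omega> * Q \<omega> \<partial>M) - (\<integral>\<omega>. Z \<omega> * Q \<omega> \<partial>M)"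
    unfolding f_eq using int same_law_integral[OF laws(1)] same_law_integral[OF laws(2)] by simp
  moreover have "0 < integral\<^sup>L M f"
  proof (rule integral_pos_if_pos_on)
    show "integrable M f" unfolding f_eq using int by simp
    have "0 \<le> f \<omega>" if "\<omega> \<in> space M" for \<omega>
      using on_C[of \<omega>] off_C[of \<omega>] that
      by (cases "\<omega> \<in> C") (auto simp: f_def C_def intro: mult_nonpos_nonpos mult_nonneg_nonneg)
    then show "AE \<omega> in M. 0 \<le> f \<omega>" by simp
    have "{\<omega>\<in>space M. Z \<omega> \<le> t \<and> t < Y \<omega>} \<in> events" by measurable
    moreover have "{\<omega>\<in>space M - C. Z \<omega> \<le> t \<and> t < Y \<omega>}
        = (space M - C) \<inter> {\<omega>\<in>space M. Z \<omega> \<le> t \<and> t < Y \<omega>}" by blast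
    ultimately show "{\<omega>\<in>space M - C. Z \<omega> \<le> t \<and> t < Y \<omega>} \<in> events"
      using C(1) by auto
    show "0 < measure M {\<omega>\<in>space M - C. Z \<omega> \<le> t \<and> t < Y \<omega>}" by (fact P)
    show "0 < f \<omega>" if "\<omega> \<in> {\<omega>\<in>space M - C. Z \<omega> \<le> t \<and> t < Y \<omega>}" for \<omega>
      using that by (auto simp: f_def C_def intro!: mult_pos_pos)
  qed
  ultimately show thesis using laws by (intro that[of Y Z]) auto
qed

end

section \<open>Law-invariant risk measures\<close>

lemma ereal_convex_combination_le:
  assumes "0 \<le> l" "l \<le> 1" "a \<le> c" "b \<le> c" "a \<noteq> -\<infinity>" "b \<noteq> -\<infinity>"
  shows "ereal l * a + ereal (1 - l) * b \<le> c"
proof (cases c)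
  case (real r)
  obtain x y where "a = ereal x" "b = ereal y" "x \<le> r" "y \<le> r"
    using assms(3-6) real by (cases a; cases b) auto
  moreover have "l * x + (1 - l) * y \<le> l * r + (1 - l) * r"
    using assms(1,2) \<open>x \<le> r\<close> \<open>y \<le> r\<close> by (intro add_mono mult_left_mono) auto
  ultimately show ?thesis using real by (simp add: algebra_simps)
qed (use assms in auto)

locale law_invariant_risk_measure = prob_space M for M :: "'a measure" +
  fixes \<X> \<X>' :: "('a \<Rightarrow> real) set" and S0 :: real and S1 :: "'a \<Rightarrow> real"
    and \<rho> :: "('a \<Rightarrow> real) \<Rightarrow> ereal"
  assumes nonatomic: "nonatomic M"
    and admissible: "admissible_space M \<X>" and admissible': "admissible_space M \<X>'"
    and pairing_integrable: "\<And>X Y. X \<in> \<X> \<Longrightarrow> Y \<in> \<X>' \<Longrightarrow> integrable M (\<lambda>\<omega>. X \<omega> * Y \<omega>)"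
    and eligible: "eligible_asset M \<X> S0 S1"
    and risk_measure: "S_additive_risk_measure M \<X> S0 S1 \<rho>"
    and convex: "convex_fun \<X> \<rho>"
    and lsc: "lsc_on (weak_top M \<X> \<X>') \<rho>"
    and law_invariant: "law_invariant_fun M \<X> \<rho>"
    and finite_at_0: "\<rho> (\<lambda>_. 0) < \<infinity>"
    and risky: "risky M S1"
begin

lemma S1_in: "S1 \<in> \<X>"
  using eligible by (simp add: eligible_asset_def)

lemma expectation_S1_pos: "0 < expectation S1"
proof -
  have nonneg: "AE \<omega> in M. 0 \<le> S1 \<omega>" and "\<not> (AE \<omega> in M. S1 \<omega> = 0)"
    using eligible by (simp_all add: eligible_asset_def)
  then have "expectation S1 \<noteq> 0"
    using integral_nonneg_eq_0_iff_AE[OF admissible_space_integrable[OF admissible S1_in] nonneg] by simp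
  moreover have "0 \<le> expectation S1" using nonneg by (rule integral_nonneg_AE)
  ultimately show ?thesis by simp
qed

lemma rho_not_minf: "X \<in> \<X> \<Longrightarrow> \<rho> X \<noteq> -\<infinity>"
  using risk_measure by (simp add: S_additive_risk_measure_def)

lemma rho_add_S1: "X \<in> \<X> \<Longrightarrow> \<rho> (\<lambda>\<omega>. X \<omega> + m * S1 \<omega>) = \<rho> X - ereal (m * S0)"
  using risk_measure by (simp add: S_additive_risk_measure_def)

lemma rho_same_law: "X \<in> \<X> \<Longrightarrow> same_law M X Y \<Longrightarrow> \<rho> Y = \<rho> X"
  using law_invariant admissible_space_same_law[OF admissible] unfolding law_invariant_fun_def by metis

lemma rho_0_finite:
  obtains r where "\<rho> (\<lambda>_. 0) = ereal r"
  using finite_at_0 rho_not_minf[OF admissible_space_zero[OF admissible]]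
  by (cases "\<rho> (\<lambda>_. 0)") auto

lemma rho_cmult_S1: "\<rho> (\<lambda>\<omega>. m * S1 \<omega>) = \<rho> (\<lambda>_. 0) - ereal (m * S0)"
  using rho_add_S1[OF admissible_space_zero[OF admissible], of m] by simp

lemma rho_convex:
  "X \<in> \<X> \<Longrightarrow> Y \<in> \<X> \<Longrightarrow> 0 \<le> l \<Longrightarrow> l \<le> 1 \<Longrightarrow>
    \<rho> (\<lambda>\<omega>. l * X \<omega> + (1 - l) * Y \<omega>) \<le> ereal l * \<rho> X + ereal (1 - l) * \<rho> Y"
  using convex by (simp add: convex_fun_def)

lemma sublevel_closed: "closedin (weak_top M \<X> \<X>') {W \<in> \<X>. \<rho> W \<le> c}"
  using lsc unfolding lsc_on_def topspace_weak_top by blast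

lemma sublevel_convex:
  assumes "W1 \<in> \<X>" "W2 \<in> \<X>" "\<rho> W1 \<le> c" "\<rho> W2 \<le> c" "0 \<le> l" "l \<le> 1"
  shows "\<rho> (\<lambda>\<omega>. l * W1 \<omega> + (1 - l) * W2 \<omega>) \<le> c"
  using rho_convex[OF assms(1,2,5,6)]
    ereal_convex_combination_le[OF assms(5,6,3,4) rho_not_minf[OF assms(1)] rho_not_minf[OF assms(2)]]
  by (rule order_trans)

text \<open>The sublevel set of \<open>\<rho> 0\<close> contains \<open>m S' - m S1\<close> for every real \<open>m\<close>.\<close>

lemma pairing_law_invariant:
  assumes Y: "Y \<in> \<X>'"
    and bound: "\<And>W. W \<in> \<X> \<Longrightarrow> \<rho> W \<le> \<rho> (\<lambda>_. 0) \<Longrightarrow> (\<integral>\<omega>. W \<omega> * Y \<omega> \<partial>M) \<le> \<alpha>"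
    and S': "same_law M S1 S'"
  shows "(\<integral>\<omega>. S' \<omega> * Y \<omega> \<partial>M) = (\<integral>\<omega>. S1 \<omega> * Y \<omega> \<partial>M)"
proof (rule ccontr)
  define d where "d = (\<integral>\<omega>. S' \<omega> * Y \<omega> \<partial>M) - (\<integral>\<omega>. S1 \<omega> * Y \<omega> \<partial>M)"
  assume "\<not> ?thesis"
  then have "d \<noteq> 0" by (simp add: d_def)
  define m where "m = (\<alpha> + 1) / d"
  define W where "W \<omega> = m * S' \<omega> + (- m) * S1 \<omega>" for \<omega>
  have S'_in: "S' \<in> \<X>" using admissible_space_same_law[OF admissible S1_in S'] .
  have mS'_in: "(\<lambda>\<omega>. m * S' \<omega>) \<in> \<X>" using admissible_space_cmult[OF admissible S'_in] .
  have "W \<in> \<X>"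
    unfolding W_def using admissible_space_add admissible_space_cmult admissible S'_in S1_in by blast
  moreover have "\<rho> W = \<rho> (\<lambda>_. 0)"
  proof -
    have "\<rho> (\<lambda>\<omega>. m * S' \<omega>) = \<rho> (\<lambda>\<omega>. m * S1 \<omega>)"
      using rho_same_law[OF admissible_space_cmult[OF admissible S1_in] same_law_cmult[OF S']] .
    moreover obtain r where "\<rho> (\<lambda>_. 0) = ereal r" by (rule rho_0_finite)
    ultimately show ?thesis
      unfolding W_def using rho_add_S1[OF mS'_in, of "- m"] rho_cmult_S1[of m] by simp
  qed
  ultimately have "(\<integral>\<omega>. W \<omega> * Y \<omega> \<partial>M) \<le> \<alpha>" using bound by simp
  moreover have "(\<integral>\<omega>. W \<omega> * Y \<omega> \<partial>M) = m * d"
    using pairing_integrable[OF S'_in Y] pairing_integrable[OF S1_in Y]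
    by (simp add: W_def d_def algebra_simps)
  ultimately show False using \<open>d \<noteq> 0\<close> by (simp add: m_def)
qed

lemma pairing_law_invariant_const:
  assumes Y: "Y \<in> \<X>'"
    and inv: "\<And>S'. same_law M S1 S' \<Longrightarrow> (\<integral>\<omega>. S' \<omega> * Y \<omega> \<partial>M) = (\<integral>\<omega>. S1 \<omega> * Y \<omega> \<partial>M)"
  shows "\<exists>c. AE \<omega> in M. Y \<omega> = c"
proof (rule ccontr)
  assume "\<not> ?thesis"
  moreover have "integrable M (\<lambda>\<omega>. S' \<omega> * Y \<omega>)" if "same_law M S1 S'" for S'
    using pairing_integrable[OF admissible_space_same_law[OF admissible S1_in that] Y] .
  ultimately obtain S' S'' where "same_law M S1 S'" "same_law M S1 S''"
    "(\<integral>\<omega>. S' \<omega> * Y \<omega> \<partial>M) \<noteq> (\<integral>\<omega>. S'' \<omega> * Y \<omega> \<partial>M)"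
    using nonatomic_rearrangement_pairing[OF nonatomic admissible_space_integrable[OF admissible S1_in] _
        admissible_space_integrable[OF admissible' Y]] risky
    unfolding risky_def by metis
  then show False using inv by simp
qed

lemma rho_le_rho_0:
  assumes Z: "Z \<in> \<X>" "expectation Z = 0"
  shows "\<rho> Z \<le> \<rho> (\<lambda>_. 0)"
proof (rule ccontr)
  define K where "K = {W \<in> \<X>. \<rho> W \<le> \<rho> (\<lambda>_. 0)}"
  assume "\<not> ?thesis"
  then have "Z \<notin> K" by (simp add: K_def)
  have "(\<lambda>_. 0) \<in> K" using admissible_space_zero[OF admissible] by (simp add: K_def)
  have K_closed: "closedin (weak_top M \<X> \<X>') K" unfolding K_def by (rule sublevel_closed)
  have K_conv: "(\<lambda>\<omega>. l * W1 \<omega> + (1 - l) * W2 \<omega>) \<in> K"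
    if "W1 \<in> K" "W2 \<in> K" "0 \<le> l" "l \<le> 1" for W1 W2 l
    using that sublevel_convex admissible_space_add[OF admissible] admissible_space_cmult[OF admissible]
    unfolding K_def by blast
  obtain Y \<alpha> where Y: "Y \<in> \<X>'" and Z_sep: "\<alpha> < (\<integral>\<omega>. Z \<omega> * Y \<omega> \<partial>M)"
    and K_sep: "\<And>W. W \<in> K \<Longrightarrow> (\<integral>\<omega>. W \<omega> * Y \<omega> \<partial>M) \<le> \<alpha>"
    using weak_top_strict_separation[OF admissible' pairing_integrable K_closed _ K_conv Z(1) \<open>Z \<notin> K\<close>]
      \<open>(\<lambda>_. 0) \<in> K\<close> by blast
  have "0 \<le> \<alpha>" using K_sep[of "\<lambda>_. 0"] \<open>(\<lambda>_. 0) \<in> K\<close> by simp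
  have "(\<integral>\<omega>. S' \<omega> * Y \<omega> \<partial>M) = (\<integral>\<omega>. S1 \<omega> * Y \<omega> \<partial>M)" if "same_law M S1 S'" for S'
    by (rule pairing_law_invariant[OF Y _ that]) (use K_sep in \<open>auto simp: K_def\<close>)
  then obtain c where "AE \<omega> in M. Y \<omega> = c"
    using pairing_law_invariant_const[OF Y] by blast
  then have "(\<integral>\<omega>. Z \<omega> * Y \<omega> \<partial>M) = (\<integral>\<omega>. c * Z \<omega> \<partial>M)"
    using pairing_integrable[OF Z(1) Y] admissible_space_integrable[OF admissible Z(1)]
    by (intro integral_cong_AE) (auto elim!: eventually_mono)
  with Z(2) Z_sep \<open>0 \<le> \<alpha>\<close> show False by simp
qed

lemma rho_eq_rho_0:
  assumes Z: "Z \<in> \<X>" "expectation Z = 0"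
  shows "\<rho> Z = \<rho> (\<lambda>_. 0)"
proof -
  have mZ: "(\<lambda>\<omega>. (-1) * Z \<omega>) \<in> \<X>" using admissible_space_cmult[OF admissible Z(1)] .
  obtain r where r: "\<rho> (\<lambda>_. 0) = ereal r" by (rule rho_0_finite)
  have "\<rho> Z \<le> ereal r" "\<rho> (\<lambda>\<omega>. (-1) * Z \<omega>) \<le> ereal r"
    using rho_le_rho_0[OF Z] rho_le_rho_0[OF mZ] Z(2) r by simp_all
  then obtain z z' where z: "\<rho> Z = ereal z" "z \<le> r" and z': "\<rho> (\<lambda>\<omega>. (-1) * Z \<omega>) = ereal z'" "z' \<le> r"
    using rho_not_minf[OF Z(1)] rho_not_minf[OF mZ] by (cases "\<rho> Z"; cases "\<rho> (\<lambda>\<omega>. (-1) * Z \<omega>)") auto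
  have cancel: "(\<lambda>\<omega>. (1/2) * Z \<omega> + (1 - 1/2) * ((-1) * Z \<omega>)) = (\<lambda>_. 0)" by auto
  have "ereal r \<le> ereal (1/2) * \<rho> Z + ereal (1 - 1/2) * \<rho> (\<lambda>\<omega>. (-1) * Z \<omega>)"
    using rho_convex[OF Z(1) mZ, of "1/2"] unfolding cancel r by simp
  then show ?thesis using z z' r by simp
qed

lemma rho_formula:
  assumes X: "X \<in> \<X>"
  shows "\<rho> X = ereal (S0 / expectation S1 * expectation (\<lambda>\<omega>. - X \<omega>)) + \<rho> (\<lambda>_. 0)"
proof -
  define k where "k = expectation X / expectation S1"
  define Z where "Z \<omega> = X \<omega> + (- k) * S1 \<omega>" for \<omega>
  have Z: "Z \<in> \<X>"
    unfolding Z_def using admissible_space_add admissible_space_cmult admissible X S1_in by blast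
  have "expectation Z = expectation X - k * expectation S1"
    unfolding Z_def using admissible_space_integrable[OF admissible] X S1_in by simp
  then have "\<rho> Z = \<rho> (\<lambda>_. 0)" using rho_eq_rho_0[OF Z] expectation_S1_pos by (simp add: k_def)
  moreover have "(\<lambda>\<omega>. Z \<omega> + k * S1 \<omega>) = X" by (simp add: Z_def)
  ultimately have "\<rho> X = \<rho> (\<lambda>_. 0) - ereal (k * S0)" using rho_add_S1[OF Z, of k] by simp
  moreover obtain r where "\<rho> (\<lambda>_. 0) = ereal r" by (rule rho_0_finite)
  ultimately show ?thesis by (simp add: k_def)
qed

lemma expectation_S1_if_cash_additive:
  assumes "cash_additive_risk_measure M \<X> \<rho>"
  shows "expectation S1 = S0"
proof -
  have "\<forall>X\<in>\<X>. \<forall>m. \<rho> (\<lambda>\<omega>. X \<omega> + m * 1) = \<rho> X - ereal (m * 1)"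
    using assms unfolding S_additive_risk_measure_def by blast
  from this[rule_format, OF admissible_space_zero[OF admissible], of 1]
  have "\<rho> (\<lambda>_. 1) = \<rho> (\<lambda>_. 0) - ereal 1" by simp
  moreover have "\<rho> (\<lambda>_. 1) = ereal (S0 / expectation S1 * (-1)) + \<rho> (\<lambda>_. 0)"
    using rho_formula[OF admissible_space_const[OF admissible, of 1]] by (simp add: prob_space)
  moreover obtain r where "\<rho> (\<lambda>_. 0) = ereal r" by (rule rho_0_finite)
  ultimately have "r - 1 = - (S0 / expectation S1) + r" by simp
  then have "S0 / expectation S1 = 1" by simp
  then show ?thesis using expectation_S1_pos by (simp add: field_simps)
qed

end

theorem proposition5p7:
  fixes M :: "'a measure" and \<X> \<X>' :: "('a \<Rightarrow> real) set"
    and S0 :: real and S1 :: "'a \<Rightarrow> real" and \<rho> :: "('a \<Rightarrow> real) \<Rightarrow> ereal"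
  assumes "prob_space M" and "nonatomic M"
    and "admissible_space M \<X>" and "admissible_space M \<X>'"
    and "\<forall>X\<in>\<X>. \<forall>Y\<in>\<X>'. integrable M (\<lambda>\<omega>. X \<omega> * Y \<omega>)"
    and "eligible_asset M \<X> S0 S1"
    and "S_additive_risk_measure M \<X> S0 S1 \<rho>"
    and "\<exists>X\<in>\<X>. \<rho> X < \<infinity>"
    and "convex_fun \<X> \<rho>"
    and "lsc_on (weak_top M \<X> \<X>') \<rho>"
    and "law_invariant_fun M \<X> \<rho>"
    and "\<rho> (\<lambda>_. 0) < \<infinity>"
    and "risky M S1"
  shows "(\<forall>X\<in>\<X>. \<rho> X = ereal (S0 / integral\<^sup>L M S1 * integral\<^sup>L M (\<lambda>\<omega>. - X \<omega>)) + \<rho> (\<lambda>_. 0))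
    \<and> (cash_additive_risk_measure M \<X> \<rho> \<longrightarrow> integral\<^sup>L M S1 = S0)"
proof -
  have "law_invariant_risk_measure M \<X> \<X>' S0 S1 \<rho>"
    using assms unfolding law_invariant_risk_measure_def law_invariant_risk_measure_axioms_def by blast
  then interpret law_invariant_risk_measure M \<X> \<X>' S0 S1 \<rho> .
  show ?thesis using rho_formula expectation_S1_if_cash_additive by blast
qed

end
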